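(* Let $\mathscr{VC}$ denote the set of concordance classes of long virtual knots. Then $\mathscr{VC}$, equipped with the operation induced by concatenation $\#$ and with identity element the class of the trivial long knot $1$, is a group.
   Context: A long virtual knot is an immersion $\mathbb{R}\to\mathbb{R}^2$ that coincides with the $x$-axis outside a compact set, whose double points are each marked as a classical crossing (with over/under information) or a virtual crossing, oriented from $-\infty$ to $+\infty$, considered up to the extended Reidemeister moves (the classical Reidemeister moves together with the detour move). A long virtual link is a virtual link diagram in which exactly one component is a long virtual knot and the remaining components are closed. The trivial long knot $1$ is the $x$-axis. For long virtual knots $K_1,K_2$, the concatenation $K_1\#K_2$ is obtained by drawing $K_2$ to the right of $K_1$. Concordance: two long virtual knots $K_1,K_2$ are concordant, written $K_1\asymp K_2$, if one can be obtained from the other by extended Reidemeister moves together with a finite sequence of births (adding a disjoint trivial circle with no crossings), deaths (removing such a circle) and saddles (replacing, in a small disk, two oppositely oriented parallel arcs $)\,($ by the two arcs $\smile$ over $\frown$, or conversely, respecting orientations), where the numbers $\#b,\#s,\#d$ of births, saddles and deaths satisfy $\#b-\#s+\#d=0$ (intermediate stages are long virtual links). Concatenation respects concordance: if $L_1\asymp R_1$ and $L_2\asymp R_2$ then $L_1\#L_2\asymp R_1\#R_2$. *)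

theory Defs
  imports "HOL-Combinatorics.Transposition" "HOL-Combinatorics.Permutations" "HOL-Algebra.Group"
begin

text \<open>
A long virtual link diagram is encoded by its Gauss diagram (Goussarov-Polyak-Viro).
The cores of the components are described by a finite set of marked points on them
(gpts) together with the successor map gnxt (a permutation of gpts; every cycle is a
component).  The point 0 is the point at infinity: the cycle through 0 is the long
component, cut open at 0.  A classical crossing is recorded at its over-passing point
x by gund x = Some y, where y is the under-passing point, and gpos x is its sign
(True = positive).  Points that are not ends of crossings are plain marker points;
a closed component without crossings is a cycle of plain points.  Virtual crossings
are not recorded (they are invisible in Gauss diagrams).
\<close>

record gdiag =
  gpts :: "nat set"
  gnxt :: "nat \<Rightarrow> nat"
  gund :: "nat \<Rightarrow> nat option"
  gpos :: "nat \<Rightarrow> bool"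

definition wf_gd :: "gdiag \<Rightarrow> bool" where
  "wf_gd D \<longleftrightarrow> finite (gpts D) \<and> 0 \<in> gpts D \<and> gnxt D permutes gpts D
     \<and> dom (gund D) \<subseteq> gpts D - {0} \<and> ran (gund D) \<subseteq> gpts D - {0}
     \<and> inj_on (gund D) (dom (gund D)) \<and> dom (gund D) \<inter> ran (gund D) = {}"

definition long_knot :: "gdiag \<Rightarrow> bool" where
  "long_knot D \<longleftrightarrow> wf_gd D \<and> (\<forall>x\<in>gpts D. \<exists>n. (gnxt D ^^ n) 0 = x)"

definition triv_long :: gdiag where
  "triv_long = \<lparr>gpts = {0}, gnxt = id, gund = (\<lambda>_. None), gpos = (\<lambda>_. True)\<rparr>"

definition gd_iso :: "gdiag \<Rightarrow> gdiag \<Rightarrow> bool" where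
  "gd_iso D E \<longleftrightarrow> (\<exists>f. bij f \<and> f 0 = 0 \<and> f ` gpts D = gpts E \<and>
     (\<forall>x\<in>gpts D. gnxt E (f x) = f (gnxt D x) \<and> gund E (f x) = map_option f (gund D x)
        \<and> (gund D x \<noteq> None \<longrightarrow> gpos E (f x) = gpos D x)))"

text \<open>Insertion of a plain marker point after the point x (bookkeeping only).\<close>
definition ins_plain :: "gdiag \<Rightarrow> gdiag \<Rightarrow> bool" where
  "ins_plain D E \<longleftrightarrow> (\<exists>x p. x \<in> gpts D \<and> p \<notin> gpts D \<and>
     E = D\<lparr>gpts := insert p (gpts D), gnxt := (gnxt D)(x := p, p := gnxt D x)\<rparr>)"

text \<open>R1 (removing a kink): a crossing whose two ends are consecutive.\<close>
definition gd_R1 :: "gdiag \<Rightarrow> gdiag \<Rightarrow> bool" where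
  "gd_R1 D E \<longleftrightarrow> (\<exists>x y. gund D x = Some y \<and> (gnxt D x = y \<or> gnxt D y = x) \<and>
     E = D\<lparr>gund := (gund D)(x := None)\<rparr>)"

text \<open>R2 (removing a bigon): two crossings of opposite signs whose over-ends are
  consecutive on one strand and whose under-ends are consecutive (in either order,
  i.e. parallel or antiparallel strands) on another.\<close>
definition gd_R2 :: "gdiag \<Rightarrow> gdiag \<Rightarrow> bool" where
  "gd_R2 D E \<longleftrightarrow> (\<exists>x1 x2 y1 y2. gund D x1 = Some y1 \<and> gund D x2 = Some y2 \<and>
     gnxt D x1 = x2 \<and> (gnxt D y1 = y2 \<or> gnxt D y2 = y1) \<and> gpos D x1 \<noteq> gpos D x2 \<and>
     E = D\<lparr>gund := (gund D)(x1 := None, x2 := None)\<rparr>)"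

definition gd_adj :: "gdiag \<Rightarrow> bool \<Rightarrow> nat \<Rightarrow> nat \<Rightarrow> bool" where
  "gd_adj D o' u v \<longleftrightarrow> (if o' then gnxt D u = v else gnxt D v = u)"

text \<open>R3: strands T (top), M (middle), B (bottom); crossings a = T over M (ends tA, mA),
  b = T over B (ends tB, bB), c = M over B (ends mC, bC).  The ends of the two crossings
  on each strand are consecutive; oT, oM, oB say whether a comes before b on T,
  a before c on M, b before c on B.  Realisability of the triangle by three oriented
  arcs in a disk is exactly the sign condition below.  The move reverses the order of the
  two ends on each of the three strands.\<close>
definition gd_R3 :: "gdiag \<Rightarrow> gdiag \<Rightarrow> bool" where
  "gd_R3 D E \<longleftrightarrow> (\<exists>tA tB mA mC bB bC oT oM oB.
     distinct [tA, tB, mC] \<and>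
     gund D tA = Some mA \<and> gund D tB = Some bB \<and> gund D mC = Some bC \<and>
     gd_adj D oT tA tB \<and> gd_adj D oM mA mC \<and> gd_adj D oB bB bC \<and>
     ((oM = gpos D tA) = (oB = gpos D tB)) \<and> ((oT = gpos D tB) = (oM = gpos D mC)) \<and>
     (let \<tau> = transpose tA tB \<circ> transpose mA mC \<circ> transpose bB bC in
      E = D\<lparr>gund := map_option \<tau> \<circ> gund D \<circ> \<tau>, gpos := gpos D \<circ> \<tau>\<rparr>))"

definition rmove :: "gdiag \<Rightarrow> gdiag \<Rightarrow> bool" where
  "rmove D E \<longleftrightarrow> gd_iso D E \<or> ins_plain D E \<or> gd_R1 D E \<or> gd_R2 D E \<or> gd_R3 D E"

definition gd_birth :: "gdiag \<Rightarrow> gdiag \<Rightarrow> bool" where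
  "gd_birth D E \<longleftrightarrow> (\<exists>p. p \<notin> gpts D \<and> E = D\<lparr>gpts := insert p (gpts D)\<rparr>)"

text \<open>Saddle between the arc leaving x and the arc leaving y (any two arcs can be brought
  together antiparallel in a small disk by detour moves).\<close>
definition gd_saddle :: "gdiag \<Rightarrow> gdiag \<Rightarrow> bool" where
  "gd_saddle D E \<longleftrightarrow> (\<exists>x y. x \<in> gpts D \<and> y \<in> gpts D \<and> x \<noteq> y \<and>
     E = D\<lparr>gnxt := (gnxt D)(x := gnxt D y, y := gnxt D x)\<rparr>)"

inductive cob :: "gdiag \<Rightarrow> gdiag \<Rightarrow> int \<Rightarrow> bool" where
  cob_refl: "wf_gd D \<Longrightarrow> cob D D 0"
| cob_move: "cob D E k \<Longrightarrow> wf_gd F \<Longrightarrow> rmove E F \<or> rmove F E \<Longrightarrow> cob D F k"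
| cob_birth: "cob D E k \<Longrightarrow> wf_gd F \<Longrightarrow> gd_birth E F \<Longrightarrow> cob D F (k + 1)"
| cob_death: "cob D E k \<Longrightarrow> wf_gd F \<Longrightarrow> gd_birth F E \<Longrightarrow> cob D F (k + 1)"
| cob_saddle: "cob D E k \<Longrightarrow> wf_gd F \<Longrightarrow> gd_saddle E F \<Longrightarrow> cob D F (k - 1)"

definition concordant :: "gdiag \<Rightarrow> gdiag \<Rightarrow> bool" where
  "concordant K1 K2 \<longleftrightarrow> long_knot K1 \<and> long_knot K2 \<and> cob K1 K2 0"

definition conc_rel :: "(gdiag \<times> gdiag) set" where
  "conc_rel = {(K1, K2). concordant K1 K2}"

definition lk_concat :: "gdiag \<Rightarrow> gdiag \<Rightarrow> gdiag" where
  "lk_concat K1 K2 = (let N = Suc (Max (gpts K1)) in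
    \<lparr>gpts = gpts K1 \<union> (\<lambda>z. z + N) ` gpts K2,
     gnxt = (\<lambda>x. if x \<in> gpts K1 then (if gnxt K1 x = 0 then N else gnxt K1 x)
                else if N \<le> x \<and> x - N \<in> gpts K2
                  then (if gnxt K2 (x - N) = 0 then 0 else gnxt K2 (x - N) + N)
                else x),
     gund = (\<lambda>x. if x \<in> gpts K1 then gund K1 x
                else if N \<le> x \<and> x - N \<in> gpts K2 then map_option (\<lambda>z. z + N) (gund K2 (x - N))
                else None),
     gpos = (\<lambda>x. if x \<in> gpts K1 then gpos K1 x else gpos K2 (x - N))\<rparr>)"

definition VC :: "gdiag set set" where
  "VC = {K. long_knot K} // conc_rel"

definition vc_mult :: "gdiag set \<Rightarrow> gdiag set \<Rightarrow> gdiag set" where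
  "vc_mult A B = (\<Union>a\<in>A. \<Union>b\<in>B. conc_rel `` {lk_concat a b})"

definition VC_group :: "gdiag set monoid" where
  "VC_group = \<lparr>carrier = VC, monoid.mult = vc_mult, one = conc_rel `` {triv_long}\<rparr>"

end

theory Submission
  imports Defs "HOL-Combinatorics.Orbits"
begin

text \<open>Concatenation is the special case of plugging a long strand into a plain point of a fixed
  two-point diagram, and plugging turns every Reidemeister move, birth, death or saddle of the
  plugged diagram into one of the same kind; hence concordance is a congruence for concatenation.
  Associativity and the unit law hold up to relabelling and the removal of one plain point.
  The inverse of a long knot \<open>K\<close> is its reflection \<open>K'\<close> in a vertical line. In \<open>K' # K\<close>, one
  saddle for each of the \<open>n\<close> points of \<open>K\<close> zips the two mirror image strands together, leaving the
  trivial long knot and \<open>n\<close> small circles; Reidemeister II moves remove the crossings in pairs and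
  the \<open>n\<close> circles die. The \<open>n\<close> saddles and \<open>n\<close> deaths cancel, so \<open>K' # K\<close> is concordant to the
  trivial long knot.\<close>

context
  fixes D :: gdiag
  assumes wf: "wf_gd D"
begin

lemma wf_gd_finite: "finite (gpts D)"
  using wf by (simp add: wf_gd_def)

lemma wf_gd_zero: "0 \<in> gpts D"
  using wf by (simp add: wf_gd_def)

lemma wf_gd_permutes: "gnxt D permutes gpts D"
  using wf by (simp add: wf_gd_def)

lemma wf_gd_nxt_in: "x \<in> gpts D \<Longrightarrow> gnxt D x \<in> gpts D"
  using wf_gd_permutes by (simp add: permutes_in_image)

lemma wf_gd_iter_in: "x \<in> gpts D \<Longrightarrow> (gnxt D ^^ n) x \<in> gpts D"
  by (induction n) (simp_all add: wf_gd_nxt_in)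

lemma wf_gd_nxt_out: "x \<notin> gpts D \<Longrightarrow> gnxt D x = x"
  using wf_gd_permutes by (simp add: permutes_not_in)

lemma wf_gd_nxt_inj: "gnxt D x = gnxt D y \<Longrightarrow> x = y"
  using wf_gd_permutes by (metis permutes_inj injD)

lemma wf_gd_und: "gund D x = Some y \<Longrightarrow> x \<in> gpts D \<and> x \<noteq> 0 \<and> y \<in> gpts D \<and> y \<noteq> 0"
  using wf unfolding wf_gd_def by (auto intro: ranI)

lemma wf_gd_und_out: "x \<notin> gpts D \<or> x = 0 \<Longrightarrow> gund D x = None"
  using wf_gd_und by (cases "gund D x") auto

lemma wf_gd_und_inj: "gund D x = Some z \<Longrightarrow> gund D y = Some z \<Longrightarrow> x = y"
  using wf unfolding wf_gd_def inj_on_def by (metis domI)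

lemma wf_gd_und_und: "gund D x = Some y \<Longrightarrow> gund D y = None"
  using wf unfolding wf_gd_def by (auto intro: ranI)

end

lemma wf_triv_long: "wf_gd triv_long"
  by (simp add: wf_gd_def triv_long_def)

lemma long_knot_triv_long: "long_knot triv_long"
  by (simp add: long_knot_def wf_triv_long) (simp add: triv_long_def)

lemma long_knot_iff_orbit:
  assumes "wf_gd K"
  shows "long_knot K \<longleftrightarrow> gpts K \<subseteq> orbit (gnxt K) 0"
proof -
  have "permutation (gnxt K)"
    by (rule permutes_imp_permutation[OF wf_gd_finite[OF assms] wf_gd_permutes[OF assms]])
  then show ?thesis
    using assms by (auto simp: long_knot_def orbit_altdef_permutation)
qed

lemma wf_gd_remove_point:
  assumes "wf_gd E" and "f permutes gpts E - {p}" and "p \<noteq> 0"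
    and "gund E p = None" and "p \<notin> ran (gund E)"
  shows "wf_gd (E\<lparr>gpts := gpts E - {p}, gnxt := f\<rparr>)"
  using assms unfolding wf_gd_def by (auto simp: dom_def)

lemma wf_gd_restrict_und:
  assumes wf: "wf_gd D" and g: "\<And>v. g v = None \<or> g v = gund D v"
  shows "wf_gd (D\<lparr>gund := g\<rparr>)"
proof -
  have some: "g v = Some w \<Longrightarrow> gund D v = Some w" for v w
    using g[of v] by auto
  then have sub: "dom g \<subseteq> dom (gund D)" "ran g \<subseteq> ran (gund D)"
    by (auto simp: dom_def ran_def)
  moreover have "dom g \<inter> ran g = {}"
  proof -
    have "dom (gund D) \<inter> ran (gund D) = {}" using wf by (simp add: wf_gd_def)
    then show ?thesis using sub by blast
  qed
  moreover have "inj_on g (dom g)"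
  proof (rule inj_onI)
    fix x y assume "x \<in> dom g" "g x = g y"
    then obtain w where "g x = Some w" "g y = Some w" by (metis domD)
    then show "x = y" using some wf_gd_und_inj[OF wf] by metis
  qed
  ultimately show ?thesis
    using wf unfolding wf_gd_def by (simp, blast)
qed

section \<open>Cobordisms\<close>

lemma cob_wf: "cob D E k \<Longrightarrow> wf_gd D \<and> wf_gd E"
  by (induction rule: cob.induct) auto

lemma cob_trans:
  assumes "cob D E k" and "cob E F l"
  shows "cob D F (k + l)"
  using assms(2,1)
proof (induction rule: cob.induct)
  case (cob_birth E F l G)
  then show ?case using cob.cob_birth[of D F "k + l" G] by (simp add: add.assoc)
next
  case (cob_death E F l G)
  then show ?case using cob.cob_death[of D F "k + l" G] by (simp add: add.assoc)
next
  case (cob_saddle E F l G)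
  then show ?case using cob.cob_saddle[of D F "k + l" G] by (simp add: algebra_simps)
qed (simp_all add: cob.cob_move)

lemma cob_rmoveI: "wf_gd D \<Longrightarrow> wf_gd E \<Longrightarrow> rmove D E \<or> rmove E D \<Longrightarrow> cob D E 0"
  using cob.cob_move[OF cob_refl] by blast

lemma cob_birthI: "wf_gd D \<Longrightarrow> wf_gd E \<Longrightarrow> gd_birth D E \<Longrightarrow> cob D E 1"
  using cob.cob_birth[OF cob_refl] by fastforce

lemma cob_deathI: "wf_gd D \<Longrightarrow> wf_gd E \<Longrightarrow> gd_birth E D \<Longrightarrow> cob D E 1"
  using cob.cob_death[OF cob_refl] by fastforce

lemma cob_saddleI: "wf_gd D \<Longrightarrow> wf_gd E \<Longrightarrow> gd_saddle D E \<Longrightarrow> cob D E (-1)"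
  using cob.cob_saddle[OF cob_refl] by fastforce

lemma gd_saddle_sym:
  assumes "gd_saddle D E"
  shows "gd_saddle E D"
proof -
  obtain x y where "x \<in> gpts D" "y \<in> gpts D" "x \<noteq> y"
    and "E = D\<lparr>gnxt := (gnxt D)(x := gnxt D y, y := gnxt D x)\<rparr>"
    using assms unfolding gd_saddle_def by blast
  then show ?thesis
    unfolding gd_saddle_def by (intro exI[of _ x] exI[of _ y]) (auto intro!: ext)
qed

lemma cob_sym: "cob D E k \<Longrightarrow> cob E D k"
proof (induction rule: cob.induct)
  case (cob_move D E k F)
  have "cob F E 0"
    using cob_move.hyps cob_wf[OF cob_move.hyps(1)] by (blast intro: cob_rmoveI)
  from cob_trans[OF this cob_move.IH] show ?case by simp
next
  case (cob_birth D E k F)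
  have "cob F E 1"
    using cob_birth.hyps cob_wf[OF cob_birth.hyps(1)] by (blast intro: cob_deathI)
  from cob_trans[OF this cob_birth.IH] show ?case by (simp add: add.commute)
next
  case (cob_death D E k F)
  have "cob F E 1"
    using cob_death.hyps cob_wf[OF cob_death.hyps(1)] by (blast intro: cob_birthI)
  from cob_trans[OF this cob_death.IH] show ?case by (simp add: add.commute)
next
  case (cob_saddle D E k F)
  have "cob F E (-1)"
    using cob_saddle.hyps cob_wf[OF cob_saddle.hyps(1)] by (blast intro: cob_saddleI gd_saddle_sym)
  from cob_trans[OF this cob_saddle.IH] show ?case by (simp add: add.commute)
qed (rule cob.cob_refl)

lemma equiv_conc_rel: "equiv {K. long_knot K} conc_rel"
  unfolding equiv_def refl_on_def sym_def trans_def conc_rel_def concordant_def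
  by (auto simp: long_knot_def intro: cob_refl cob_sym dest: cob_trans)

lemma cob_remove_plain_point:
  assumes wf: "wf_gd E" and xp: "gnxt E x = p" and p: "p \<in> gpts E" "p \<noteq> 0" "p \<noteq> x"
    and plain: "gund E p = None" "p \<notin> ran (gund E)"
  shows "cob E (E\<lparr>gpts := gpts E - {p}, gnxt := (gnxt E)(x := gnxt E p, p := p)\<rparr>) 0"
proof -
  let ?D = "E\<lparr>gpts := gpts E - {p}, gnxt := (gnxt E)(x := gnxt E p, p := p)\<rparr>"
  have x: "x \<in> gpts E" using wf_gd_nxt_out[OF wf, of x] xp p(3) by metis
  have "(gnxt E)(x := gnxt E p, p := p) = gnxt E \<circ> Transposition.transpose x p"
    using xp p(3) by (auto simp: fun_eq_iff transpose_def)
  moreover have "gnxt E \<circ> Transposition.transpose x p permutes gpts E"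
    using wf_gd_permutes[OF wf] permutes_swap_id[OF x p(1)] by (rule permutes_compose[rotated])
  ultimately have "(gnxt E)(x := gnxt E p, p := p) permutes gpts E"
    by simp
  then have "(gnxt E)(x := gnxt E p, p := p) permutes gpts E - {p}"
    by (rule permutes_superset) simp
  then have wfD: "wf_gd ?D"
    by (rule wf_gd_remove_point[OF wf _ p(2) plain])
  have "ins_plain ?D E"
    unfolding ins_plain_def using x p xp
    by (intro exI[of _ x] exI[of _ p]) (auto simp: gdiag.equality fun_eq_iff insert_absorb)
  then show ?thesis
    using wf wfD by (intro cob_rmoveI) (simp_all add: rmove_def)
qed

lemma cob_remove_trivial_circle:
  assumes wf: "wf_gd E" and p: "p \<in> gpts E" "p \<noteq> 0" and fixed: "gnxt E p = p"
    and plain: "gund E p = None" "p \<notin> ran (gund E)"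
  shows "cob E (E\<lparr>gpts := gpts E - {p}\<rparr>) 1"
proof -
  have "gnxt E permutes gpts E - {p}"
    using fixed by (intro permutes_superset[OF wf_gd_permutes[OF wf]]) simp
  then have "wf_gd (E\<lparr>gpts := gpts E - {p}, gnxt := gnxt E\<rparr>)"
    by (rule wf_gd_remove_point[OF wf _ p(2) plain])
  moreover have "gd_birth (E\<lparr>gpts := gpts E - {p}\<rparr>) E"
    unfolding gd_birth_def using p by (intro exI[of _ p]) (simp add: insert_absorb)
  ultimately show ?thesis
    using wf by (intro cob_deathI) simp_all
qed

lemma cob_saddle_transpose:
  assumes wf: "wf_gd D" and "x \<in> gpts D" "y \<in> gpts D" "x \<noteq> y"
  shows "cob D (D\<lparr>gnxt := gnxt D \<circ> Transposition.transpose x y\<rparr>) (-1)"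
proof (rule cob_saddleI[OF wf])
  have "gnxt D \<circ> Transposition.transpose x y permutes gpts D"
    using wf_gd_permutes[OF wf] permutes_swap_id[OF assms(2,3)] by (rule permutes_compose[rotated])
  then show "wf_gd (D\<lparr>gnxt := gnxt D \<circ> Transposition.transpose x y\<rparr>)"
    using wf by (simp add: wf_gd_def)
  have "(gnxt D)(x := gnxt D y, y := gnxt D x) = gnxt D \<circ> Transposition.transpose x y"
    using assms(4) by (auto simp: fun_eq_iff transpose_def)
  then show "gd_saddle D (D\<lparr>gnxt := gnxt D \<circ> Transposition.transpose x y\<rparr>)"
    unfolding gd_saddle_def using assms(2-4) by (intro exI[of _ x] exI[of _ y]) simp
qed

lemma finite_inj_on_extend_bij:
  fixes f :: "'a \<Rightarrow> 'a"
  assumes fin: "finite A" and inj: "inj_on f A"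
  obtains g where "bij g" and "\<And>x. x \<in> A \<Longrightarrow> g x = f x"
proof -
  define B where "B = A \<union> f ` A"
  have "finite B" using fin by (simp add: B_def)
  moreover have "card (B - A) = card (B - f ` A)"
    using fin card_image[OF inj] by (simp add: card_Diff_subset B_def)
  ultimately obtain h where h: "bij_betw h (B - A) (B - f ` A)"
    using finite_same_card_bij[of "B - A" "B - f ` A"] by auto
  define g where "g x = (if x \<in> A then f x else if x \<in> B then h x else x)" for x
  have "bij_betw g (A \<union> (B - A)) (f ` A \<union> (B - f ` A))"
  proof (rule bij_betw_combine)
    show "bij_betw g A (f ` A)"
      using inj by (auto simp: g_def bij_betw_def inj_on_def)
    show "bij_betw g (B - A) (B - f ` A)"
      using h by (rule bij_betw_cong[THEN iffD1, rotated]) (simp add: g_def)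
  qed simp
  moreover have "A \<union> (B - A) = B" "f ` A \<union> (B - f ` A) = B"
    by (auto simp: B_def)
  ultimately have "bij_betw g B B" by simp
  then have "g permutes B"
    by (rule bij_imp_permutes) (simp add: g_def B_def)
  then show ?thesis
    by (rule that[OF permutes_bij]) (simp add: g_def)
qed

lemma gd_isoI:
  assumes wf: "wf_gd D" and inj: "inj_on f (gpts D)" and f0: "f 0 = 0"
    and img: "f ` gpts D = gpts E"
    and nxt: "\<And>x. x \<in> gpts D \<Longrightarrow> gnxt E (f x) = f (gnxt D x)"
    and und: "\<And>x. x \<in> gpts D \<Longrightarrow> gund E (f x) = map_option f (gund D x)"
    and pos: "\<And>x. x \<in> gpts D \<Longrightarrow> gund D x \<noteq> None \<Longrightarrow> gpos E (f x) = gpos D x"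
  shows "gd_iso D E"
proof -
  obtain g where g: "bij g" and gf: "\<And>x. x \<in> gpts D \<Longrightarrow> g x = f x"
    using finite_inj_on_extend_bij[OF wf_gd_finite[OF wf] inj] by blast
  have und_g: "map_option g (gund D x) = map_option f (gund D x)" for x
    using gf wf_gd_und[OF wf] by (cases "gund D x") auto
  show ?thesis
    unfolding gd_iso_def
  proof (intro exI[of _ g] conjI ballI impI)
    show "bij g" by (fact g)
    show "g 0 = 0" using gf f0 wf_gd_zero[OF wf] by simp
    show "g ` gpts D = gpts E" using gf img by force
    fix x assume x: "x \<in> gpts D"
    show "gnxt E (g x) = g (gnxt D x)" using x gf nxt wf_gd_nxt_in[OF wf] by simp
    show "gund E (g x) = map_option g (gund D x)" using x gf und und_g by simp
    show "gpos E (g x) = gpos D x" if "gund D x \<noteq> None" using x gf pos that by simp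
  qed
qed

lemma gd_iso_on_pts:
  assumes "gpts E = gpts D"
    and "\<And>x. x \<in> gpts D \<Longrightarrow> gnxt E x = gnxt D x"
    and "\<And>x. x \<in> gpts D \<Longrightarrow> gund E x = gund D x"
    and "\<And>x. x \<in> gpts D \<Longrightarrow> gund D x \<noteq> None \<Longrightarrow> gpos E x = gpos D x"
  shows "gd_iso D E"
  unfolding gd_iso_def using assms by (intro exI[of _ id]) (simp add: option.map_id)

lemma gd_iso_permutes:
  assumes iso: "gd_iso D E" and wf: "wf_gd D"
    and nxt_out: "\<And>x. x \<notin> gpts E \<Longrightarrow> gnxt E x = x"
  shows "gnxt E permutes gpts E"
proof -
  obtain f where f: "bij f" and img: "f ` gpts D = gpts E"
    and nxt: "\<And>x. x \<in> gpts D \<Longrightarrow> gnxt E (f x) = f (gnxt D x)"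
    using iso unfolding gd_iso_def by blast
  have f_eq: "f x = f y \<longleftrightarrow> x = y" for x y
    using f by (meson bij_is_inj inj_eq)
  have pts_E: "y \<in> gpts E \<longleftrightarrow> (\<exists>x\<in>gpts D. y = f x)" for y
    using img by blast
  show ?thesis
  proof (rule inj_imp_permutes)
    show "inj_on (gnxt E) (gpts E)"
    proof (rule inj_onI)
      fix y1 y2 assume "y1 \<in> gpts E" "y2 \<in> gpts E" "gnxt E y1 = gnxt E y2"
      then show "y1 = y2"
        using pts_E nxt f_eq wf_gd_nxt_inj[OF wf] by metis
    qed
    show "finite (gpts E)"
      using img wf_gd_finite[OF wf] finite_imageI by metis
    show "gnxt E y \<in> gpts E" if "y \<in> gpts E" for y
      using that pts_E nxt wf_gd_nxt_in[OF wf] by metis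
  qed (rule nxt_out)
qed

lemma gund_Some_iff_relabel:
  assumes wf: "wf_gd D" and f_eq: "\<And>x y. f x = f y \<longleftrightarrow> x = y" and img: "f ` gpts D = gpts E"
    and und: "\<And>x. x \<in> gpts D \<Longrightarrow> gund E (f x) = map_option f (gund D x)"
    and und_out: "\<And>x. x \<notin> gpts E \<Longrightarrow> gund E x = None"
  shows "gund E y = Some w \<longleftrightarrow> (\<exists>x v. y = f x \<and> w = f v \<and> gund D x = Some v)"
proof (cases "y \<in> gpts E")
  case True
  then obtain x where "x \<in> gpts D" "y = f x" using img by blast
  then show ?thesis using und f_eq by (cases "gund D x") auto
next
  case False
  have "\<not> (\<exists>x v. y = f x \<and> w = f v \<and> gund D x = Some v)"
    using False img wf_gd_und[OF wf] by blast
  then show ?thesis using und_out[OF False] by simp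
qed

lemma wf_gd_iso:
  assumes iso: "gd_iso D E" and wf: "wf_gd D"
    and nxt_out: "\<And>x. x \<notin> gpts E \<Longrightarrow> gnxt E x = x"
    and und_out: "\<And>x. x \<notin> gpts E \<Longrightarrow> gund E x = None"
  shows "wf_gd E"
proof -
  obtain f where f: "bij f" "f 0 = 0" and img: "f ` gpts D = gpts E"
    and und: "\<And>x. x \<in> gpts D \<Longrightarrow> gund E (f x) = map_option f (gund D x)"
    using iso unfolding gd_iso_def by blast
  have f_eq: "f x = f y \<longleftrightarrow> x = y" for x y
    using f(1) by (meson bij_is_inj inj_eq)
  note und_E = gund_Some_iff_relabel[OF wf f_eq img und und_out]
  have "y \<in> gpts E - {0} \<and> w \<in> gpts E - {0}" if yw: "gund E y = Some w" for y w
  proof -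
    obtain x v where xv: "y = f x" "w = f v" "gund D x = Some v" using yw und_E by blast
    then have "x \<in> gpts D" "x \<noteq> 0" "v \<in> gpts D" "v \<noteq> 0"
      using wf_gd_und[OF wf] by blast+
    then show ?thesis using xv img f_eq[of _ 0] f(2) by auto
  qed
  then have "dom (gund E) \<subseteq> gpts E - {0}" "ran (gund E) \<subseteq> gpts E - {0}"
    by (auto simp: dom_def ran_def)
  moreover have "inj_on (gund E) (dom (gund E))"
  proof (rule inj_onI)
    fix y1 y2 assume "y1 \<in> dom (gund E)" "gund E y1 = gund E y2"
    then obtain w where "gund E y1 = Some w" "gund E y2 = Some w" by (metis domD)
    then obtain x1 v1 x2 v2 where "y1 = f x1" "w = f v1" "gund D x1 = Some v1"
      and "y2 = f x2" "w = f v2" "gund D x2 = Some v2"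
      using und_E by meson
    then show "y1 = y2" using f_eq wf_gd_und_inj[OF wf] by simp
  qed
  moreover have "gund E w = None" if yw: "gund E y = Some w" for y w
  proof (rule ccontr)
    assume "gund E w \<noteq> None"
    then obtain x v where "w = f x" "gund D x = Some v" using und_E by blast
    moreover obtain x' v' where "w = f v'" "gund D x' = Some v'" using yw und_E by blast
    ultimately show False using f_eq wf_gd_und_und[OF wf] by simp
  qed
  then have "dom (gund E) \<inter> ran (gund E) = {}"
    by (auto simp: dom_def ran_def)
  moreover have "finite (gpts E)"
    using img wf_gd_finite[OF wf] finite_imageI by metis
  moreover have "0 \<in> gpts E"
    using img f(2) wf_gd_zero[OF wf] by (metis imageI)
  ultimately show ?thesis
    using gd_iso_permutes[OF iso wf nxt_out] unfolding wf_gd_def by blast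
qed

lemma long_knot_iso:
  assumes iso: "gd_iso D E" and lk: "long_knot D" and wf: "wf_gd E"
  shows "long_knot E"
proof -
  obtain f where f0: "f 0 = 0" and img: "f ` gpts D = gpts E"
    and nxt: "\<And>x. x \<in> gpts D \<Longrightarrow> gnxt E (f x) = f (gnxt D x)"
    using iso unfolding gd_iso_def by blast
  have wfD: "wf_gd D" using lk by (simp add: long_knot_def)
  have iter: "(gnxt E ^^ n) 0 = f ((gnxt D ^^ n) 0) \<and> (gnxt D ^^ n) 0 \<in> gpts D" for n
  proof (induction n)
    case 0 then show ?case using f0 wf_gd_zero[OF wfD] by simp
  next
    case (Suc n) then show ?case using nxt wf_gd_nxt_in[OF wfD] by simp
  qed
  have "\<exists>n. (gnxt E ^^ n) 0 = y" if y: "y \<in> gpts E" for y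
  proof -
    obtain x where "x \<in> gpts D" "y = f x" using y img by blast
    moreover obtain n where "(gnxt D ^^ n) 0 = x"
      using lk \<open>x \<in> gpts D\<close> by (auto simp: long_knot_def)
    ultimately show ?thesis using iter by metis
  qed
  then show ?thesis
    using wf by (simp add: long_knot_def)
qed

section \<open>Plugging a long strand into a plain point\<close>

text \<open>\<open>plug W e D\<close> replaces the plain point \<open>e 0\<close> of \<open>W\<close> by the long strand of \<open>D\<close>,
  relabelled by the injection \<open>e\<close>: on the copy of \<open>D\<close> we follow \<open>D\<close>, and where \<open>D\<close> returns
  to its point at infinity we continue with the successor of \<open>e 0\<close> in \<open>W\<close>.\<close>

definition plug :: "gdiag \<Rightarrow> (nat \<Rightarrow> nat) \<Rightarrow> gdiag \<Rightarrow> gdiag" where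
  "plug W e D =
    \<lparr>gpts = gpts W \<union> e ` gpts D,
     gnxt = (\<lambda>x. if x \<in> range e
                 then (if gnxt D (the_inv e x) = 0 then gnxt W (e 0) else e (gnxt D (the_inv e x)))
                 else gnxt W x),
     gund = (\<lambda>x. if x \<in> range e then map_option e (gund D (the_inv e x)) else gund W x),
     gpos = (\<lambda>x. if x \<in> range e then gpos D (the_inv e x) else gpos W x)\<rparr>"

lemma gpts_plug: "gpts (plug W e D) = gpts W \<union> e ` gpts D"
  by (simp add: plug_def)

lemma gdiag_eq_split:
  fixes A B :: gdiag
  assumes "gpts A = gpts B"
    and "\<And>z. gnxt A (e z) = gnxt B (e z)" "\<And>z. gund A (e z) = gund B (e z)"
    and "\<And>z. gpos A (e z) = gpos B (e z)"
    and "\<And>x. x \<notin> range e \<Longrightarrow> gnxt A x = gnxt B x \<and> gund A x = gund B x \<and> gpos A x = gpos B x"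
  shows "A = B"
proof -
  have "gnxt A x = gnxt B x \<and> gund A x = gund B x \<and> gpos A x = gpos B x" for x
    using assms(2-5) by (cases "x \<in> range e") auto
  then show ?thesis
    using assms(1) by (simp add: gdiag.equality fun_eq_iff)
qed

lemma bij_transport:
  assumes f: "bij f" and e: "inj e"
  shows "bij (\<lambda>x. if x \<in> range e then e (f (the_inv e x)) else x)"
proof -
  define g where "g x = (if x \<in> range e then e (f (the_inv e x)) else x)" for x
  have f_eq: "f x = f y \<longleftrightarrow> x = y" for x y
    using f by (meson bij_is_inj inj_eq)
  have "bij g"
  proof (rule bijI)
    show "inj g"
      by (rule injI) (auto simp: g_def f_eq e the_inv_f_f inj_eq split: if_splits)
    show "surj g"
    proof (rule surjI)
      fix y
      show "g (if y \<in> range e then e (inv_into UNIV f (the_inv e y)) else y) = y"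
        using f e by (auto simp: g_def the_inv_f_f bij_is_surj surj_f_inv_f)
    qed
  qed
  then show ?thesis by (simp add: g_def[abs_def])
qed

locale slot =
  fixes W :: gdiag and e :: "nat \<Rightarrow> nat"
  assumes wf_W: "wf_gd W" and inj_e: "inj e"
    and pts_range: "gpts W \<inter> range e = {e 0}"
    and und_slot: "gund W (e 0) = None" and slot_not_under: "e 0 \<notin> ran (gund W)"
begin

lemma e_eq_iff [simp]: "e x = e y \<longleftrightarrow> x = y"
  using inj_e by (simp add: inj_eq)

lemma the_inv_e [simp]: "the_inv e (e z) = z"
  using inj_e by (rule the_inv_f_f)

lemma e_in_W_iff: "e z \<in> gpts W \<longleftrightarrow> z = 0"
proof
  assume "e z \<in> gpts W"
  then have "e z \<in> {e 0}" using pts_range by blast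
  then show "z = 0" by simp
qed (use pts_range in blast)

lemma e_neq_0: "z \<noteq> 0 \<Longrightarrow> e z \<noteq> 0"
  using e_in_W_iff wf_gd_zero[OF wf_W] by metis

lemma nxt_W_e: "z \<noteq> 0 \<Longrightarrow> gnxt W (e z) = e z"
  using e_in_W_iff wf_gd_nxt_out[OF wf_W] by simp

lemma nxt_W_slot_in: "gnxt W (e 0) \<in> gpts W"
  using e_in_W_iff wf_gd_nxt_in[OF wf_W] by simp

lemma und_W_not_range:
  assumes "gund W x = Some y"
  shows "x \<notin> range e \<and> y \<notin> range e"
proof -
  have "x \<in> gpts W" "y \<in> gpts W" using wf_gd_und[OF wf_W assms] by auto
  then have "x \<in> range e \<Longrightarrow> x = e 0" "y \<in> range e \<Longrightarrow> y = e 0"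
    using pts_range by blast+
  moreover have "x \<noteq> e 0" using und_slot assms by auto
  moreover have "y \<noteq> e 0" using slot_not_under assms by (auto intro: ranI)
  ultimately show ?thesis by blast
qed

lemma transpose_e: "Transposition.transpose (e a) (e b) (e z) = e (Transposition.transpose a b z)"
  by (simp add: transpose_def)

lemma transpose_not_range: "x \<notin> range e \<Longrightarrow> Transposition.transpose (e a) (e b) x = x"
  by (metis rangeI transpose_apply_other)

lemma plug_e [simp]:
  "gnxt (plug W e D) (e z) = (if gnxt D z = 0 then gnxt W (e 0) else e (gnxt D z))"
  "gund (plug W e D) (e z) = map_option e (gund D z)"
  "gpos (plug W e D) (e z) = gpos D z"
  by (simp_all add: plug_def)

lemma plug_not_range:
  assumes "x \<notin> range e"
  shows "gnxt (plug W e D) x = gnxt W x" "gund (plug W e D) x = gund W x"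
    "gpos (plug W e D) x = gpos W x"
  using assms by (simp_all add: plug_def)

lemma plug_nxt_e_eq:
  assumes "v \<noteq> 0"
  shows "gnxt (plug W e D) (e u) = e v \<longleftrightarrow> gnxt D u = v"
proof -
  have "gnxt W (e 0) \<noteq> e v"
    using nxt_W_slot_in e_in_W_iff assms by metis
  then show ?thesis using assms by auto
qed

text \<open>The slot \<open>e 0\<close> is the only point of \<open>W\<close> in the range of \<open>e\<close>; all other labels
  \<open>e z\<close> are fixed by \<open>gnxt W\<close>.\<close>

lemma plug_nxt_comp:
  assumes wf: "wf_gd D"
  shows "gnxt (plug W e D) = gnxt W \<circ> map_permutation (gpts D) e (gnxt D)"
proof
  fix x
  show "gnxt (plug W e D) x = (gnxt W \<circ> map_permutation (gpts D) e (gnxt D)) x"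
  proof (cases "x \<in> e ` gpts D")
    case True
    then obtain z where z: "z \<in> gpts D" "x = e z" by blast
    then have "map_permutation (gpts D) e (gnxt D) x = e (gnxt D z)"
      using inj_e by (simp add: map_permutation_apply inj_on_subset)
    then show ?thesis using z nxt_W_e by simp
  next
    case False
    then have "map_permutation (gpts D) e (gnxt D) x = x"
      by (simp add: map_permutation_def restrict_id_def)
    moreover have "gnxt (plug W e D) x = gnxt W x"
    proof (cases "x \<in> range e")
      case True
      then obtain z where "x = e z" "z \<notin> gpts D" using False by blast
      then show ?thesis
        using wf_gd_nxt_out[OF wf] wf_gd_zero[OF wf] nxt_W_e by auto
    qed (rule plug_not_range)
    ultimately show ?thesis by simp
  qed
qed

lemma plug_und_SomeD:
  assumes "gund (plug W e D) x = Some y"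
  shows "(\<exists>a b. x = e a \<and> y = e b \<and> gund D a = Some b)
    \<or> (gund W x = Some y \<and> x \<notin> range e \<and> y \<notin> range e)"
proof (cases "x \<in> range e")
  case True
  then show ?thesis using assms by auto
next
  case False
  then show ?thesis using assms und_W_not_range by (simp add: plug_not_range)
qed

lemma wf_plug:
  assumes wf: "wf_gd D"
  shows "wf_gd (plug W e D)"
proof -
  let ?P = "plug W e D"
  have "bij_betw e (gpts D) (e ` gpts D)"
    using inj_on_subset[OF inj_e] by (simp add: bij_betw_def)
  then have "map_permutation (gpts D) e (gnxt D) permutes e ` gpts D"
    by (rule map_permutation_permutes[OF _ wf_gd_permutes[OF wf]])
  then have "map_permutation (gpts D) e (gnxt D) permutes gpts ?P"
    by (rule permutes_subset) (simp add: gpts_plug)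
  moreover have "gnxt W permutes gpts ?P"
    using wf_gd_permutes[OF wf_W] by (rule permutes_subset) (simp add: gpts_plug)
  ultimately have perm: "gnxt ?P permutes gpts ?P"
    by (simp add: plug_nxt_comp[OF wf] permutes_compose)
  have und: "x \<in> gpts ?P \<and> x \<noteq> 0 \<and> y \<in> gpts ?P \<and> y \<noteq> 0" if "gund ?P x = Some y" for x y
    using plug_und_SomeD[OF that] wf_gd_und[OF wf] wf_gd_und[OF wf_W] e_neq_0
    by (fastforce simp: gpts_plug)
  have inj: "x1 = x2" if "gund ?P x1 = Some y" "gund ?P x2 = Some y" for x1 x2 y
    using plug_und_SomeD[OF that(1)] plug_und_SomeD[OF that(2)]
      wf_gd_und_inj[OF wf] wf_gd_und_inj[OF wf_W] by auto
  have disj: "gund ?P y = None" if "gund ?P x = Some y" for x y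
    using plug_und_SomeD[OF that] wf_gd_und_und[OF wf] wf_gd_und_und[OF wf_W]
    by (auto simp: plug_not_range)
  have "dom (gund ?P) \<subseteq> gpts ?P - {0}" "ran (gund ?P) \<subseteq> gpts ?P - {0}"
    using und by (auto simp: dom_def ran_def)
  moreover have "inj_on (gund ?P) (dom (gund ?P))"
    using inj by (auto simp: inj_on_def dom_def)
  moreover have "dom (gund ?P) \<inter> ran (gund ?P) = {}"
    using disj by (auto simp: dom_def ran_def)
  ultimately show ?thesis
    using perm wf_gd_finite[OF wf] wf_gd_finite[OF wf_W] wf_gd_zero[OF wf_W]
    unfolding wf_gd_def by (simp add: gpts_plug)
qed

lemma gd_iso_plug:
  assumes wf: "wf_gd D" and iso: "gd_iso D E"
  shows "gd_iso (plug W e D) (plug W e E)"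
proof -
  obtain f where f: "bij f" "f 0 = 0" and img: "f ` gpts D = gpts E"
    and nxt: "\<And>x. x \<in> gpts D \<Longrightarrow> gnxt E (f x) = f (gnxt D x)"
    and und: "\<And>x. x \<in> gpts D \<Longrightarrow> gund E (f x) = map_option f (gund D x)"
    and pos: "\<And>x. x \<in> gpts D \<Longrightarrow> gund D x \<noteq> None \<Longrightarrow> gpos E (f x) = gpos D x"
    using iso unfolding gd_iso_def by blast
  have f_eq: "f x = f y \<longleftrightarrow> x = y" for x y
    using f(1) by (meson bij_is_inj inj_eq)
  define g where "g x = (if x \<in> range e then e (f (the_inv e x)) else x)" for x
  have g_e [simp]: "g (e z) = e (f z)" for z
    by (simp add: g_def)
  have g_W: "g x = x" if "x \<in> gpts W" for x
  proof (cases "x \<in> range e")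
    case True
    then have "x = e 0" using that pts_range by blast
    then show ?thesis using f(2) by simp
  qed (simp add: g_def)
  have "bij g"
    unfolding g_def using f(1) inj_e by (rule bij_transport)
  have "g 0 = 0" using g_W wf_gd_zero[OF wf_W] by blast
  moreover have "g ` gpts (plug W e D) = gpts (plug W e E)"
    using g_W img by (force simp: gpts_plug image_Un image_image)
  moreover have "gnxt (plug W e E) (g x) = g (gnxt (plug W e D) x)
      \<and> gund (plug W e E) (g x) = map_option g (gund (plug W e D) x)
      \<and> (gund (plug W e D) x \<noteq> None \<longrightarrow> gpos (plug W e E) (g x) = gpos (plug W e D) x)"
    if x: "x \<in> gpts (plug W e D)" for x
  proof -
    consider (D) z where "z \<in> gpts D" "x = e z" | (W) "x \<in> gpts W" "x \<notin> range e"
      using x pts_range wf_gd_zero[OF wf] by (auto simp: gpts_plug)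
    then show ?thesis
    proof cases
      case D
      have "map_option g (map_option e (gund D z)) = map_option e (map_option f (gund D z))"
        by (cases "gund D z") simp_all
      then show ?thesis
        using D nxt und pos f_eq[of _ 0] f(2) g_W[OF nxt_W_slot_in] by simp
    next
      case W
      have "map_option g (gund W x) = gund W x"
        using g_W wf_gd_und[OF wf_W] by (cases "gund W x") simp_all
      then show ?thesis
        using W g_W wf_gd_nxt_in[OF wf_W] by (simp add: plug_not_range)
    qed
  qed
  ultimately show ?thesis
    unfolding gd_iso_def using \<open>bij g\<close> by blast
qed

lemma ins_plain_plug:
  assumes wf: "wf_gd D" and mv: "ins_plain D E"
  shows "ins_plain (plug W e D) (plug W e E)"
proof -
  obtain x p where x: "x \<in> gpts D" and p: "p \<notin> gpts D"
    and E: "E = D\<lparr>gpts := insert p (gpts D), gnxt := (gnxt D)(x := p, p := gnxt D x)\<rparr>"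
    using mv unfolding ins_plain_def by blast
  have p0: "p \<noteq> 0" using p wf_gd_zero[OF wf] by metis
  have xp: "x \<noteq> p" using p x by metis
  let ?P = "plug W e D"
  show ?thesis
    unfolding ins_plain_def
  proof (intro exI conjI)
    show "e x \<in> gpts ?P" using x by (simp add: gpts_plug)
    show "e p \<notin> gpts ?P" using p p0 e_in_W_iff by (simp add: gpts_plug image_iff)
    show "plug W e E = ?P\<lparr>gpts := insert (e p) (gpts ?P),
        gnxt := (gnxt ?P)(e x := e p, e p := gnxt ?P (e x))\<rparr>"
      by (rule gdiag_eq_split[where e = e]) (auto simp: E gpts_plug p0 xp plug_not_range)
  qed
qed

lemma gd_R1_plug:
  assumes wf: "wf_gd D" and mv: "gd_R1 D E"
  shows "gd_R1 (plug W e D) (plug W e E)"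
proof -
  obtain x y where xy: "gund D x = Some y" and adj: "gnxt D x = y \<or> gnxt D y = x"
    and E: "E = D\<lparr>gund := (gund D)(x := None)\<rparr>"
    using mv unfolding gd_R1_def by blast
  have "x \<noteq> 0" "y \<noteq> 0" using wf_gd_und[OF wf xy] by auto
  moreover have "plug W e E = (plug W e D)\<lparr>gund := (gund (plug W e D))(e x := None)\<rparr>"
    by (rule gdiag_eq_split[where e = e]) (auto simp: E gpts_plug plug_not_range)
  ultimately show ?thesis
    unfolding gd_R1_def using xy adj
    by (intro exI[of _ "e x"] exI[of _ "e y"]) (auto simp: plug_nxt_e_eq)
qed

lemma gd_R2_plug:
  assumes wf: "wf_gd D" and mv: "gd_R2 D E"
  shows "gd_R2 (plug W e D) (plug W e E)"
proof -
  obtain x1 x2 y1 y2 where u1: "gund D x1 = Some y1" and u2: "gund D x2 = Some y2"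
    and n1: "gnxt D x1 = x2" and n2: "gnxt D y1 = y2 \<or> gnxt D y2 = y1"
    and sg: "gpos D x1 \<noteq> gpos D x2"
    and E: "E = D\<lparr>gund := (gund D)(x1 := None, x2 := None)\<rparr>"
    using mv unfolding gd_R2_def by blast
  have "x2 \<noteq> 0" "y1 \<noteq> 0" "y2 \<noteq> 0" using wf_gd_und[OF wf u1] wf_gd_und[OF wf u2] by auto
  moreover have "plug W e E = (plug W e D)\<lparr>gund := (gund (plug W e D))(e x1 := None, e x2 := None)\<rparr>"
    by (rule gdiag_eq_split[where e = e]) (auto simp: E gpts_plug plug_not_range)
  ultimately show ?thesis
    unfolding gd_R2_def using u1 u2 n1 n2 sg
    by (intro exI[of _ "e x1"] exI[of _ "e x2"] exI[of _ "e y1"] exI[of _ "e y2"])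
       (auto simp: plug_nxt_e_eq)
qed

lemma plug_relabel_crossings:
  assumes \<tau>'_e: "\<And>z. \<tau>' (e z) = e (\<tau> z)" and \<tau>'_not_range: "\<And>x. x \<notin> range e \<Longrightarrow> \<tau>' x = x"
  shows "plug W e (D\<lparr>gund := map_option \<tau> \<circ> gund D \<circ> \<tau>, gpos := gpos D \<circ> \<tau>\<rparr>)
    = (plug W e D)\<lparr>gund := map_option \<tau>' \<circ> gund (plug W e D) \<circ> \<tau>',
        gpos := gpos (plug W e D) \<circ> \<tau>'\<rparr>"
proof (rule gdiag_eq_split[where e = e])
  fix z
  show "gund (plug W e (D\<lparr>gund := map_option \<tau> \<circ> gund D \<circ> \<tau>, gpos := gpos D \<circ> \<tau>\<rparr>)) (e z)
    = gund ((plug W e D)\<lparr>gund := map_option \<tau>' \<circ> gund (plug W e D) \<circ> \<tau>',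
        gpos := gpos (plug W e D) \<circ> \<tau>'\<rparr>) (e z)"
    using \<tau>'_e by (cases "gund D (\<tau> z)") simp_all
next
  fix x assume x: "x \<notin> range e"
  then show "gnxt (plug W e (D\<lparr>gund := map_option \<tau> \<circ> gund D \<circ> \<tau>, gpos := gpos D \<circ> \<tau>\<rparr>)) x
      = gnxt ((plug W e D)\<lparr>gund := map_option \<tau>' \<circ> gund (plug W e D) \<circ> \<tau>',
        gpos := gpos (plug W e D) \<circ> \<tau>'\<rparr>) x
    \<and> gund (plug W e (D\<lparr>gund := map_option \<tau> \<circ> gund D \<circ> \<tau>, gpos := gpos D \<circ> \<tau>\<rparr>)) x
      = gund ((plug W e D)\<lparr>gund := map_option \<tau>' \<circ> gund (plug W e D) \<circ> \<tau>',
        gpos := gpos (plug W e D) \<circ> \<tau>'\<rparr>) x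
    \<and> gpos (plug W e (D\<lparr>gund := map_option \<tau> \<circ> gund D \<circ> \<tau>, gpos := gpos D \<circ> \<tau>\<rparr>)) x
      = gpos ((plug W e D)\<lparr>gund := map_option \<tau>' \<circ> gund (plug W e D) \<circ> \<tau>',
        gpos := gpos (plug W e D) \<circ> \<tau>'\<rparr>) x"
    using und_W_not_range \<tau>'_not_range by (cases "gund W x") (auto simp: plug_not_range)
qed (simp_all add: gpts_plug \<tau>'_e)

lemma gd_R3_plug:
  assumes wf: "wf_gd D" and mv: "gd_R3 D E"
  shows "gd_R3 (plug W e D) (plug W e E)"
proof -
  obtain tA tB mA mC bB bC oT oM oB where ds: "distinct [tA, tB, mC]"
    and uA: "gund D tA = Some mA" and uB: "gund D tB = Some bB" and uC: "gund D mC = Some bC"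
    and adj: "gd_adj D oT tA tB" "gd_adj D oM mA mC" "gd_adj D oB bB bC"
    and sg: "(oM = gpos D tA) = (oB = gpos D tB)" "(oT = gpos D tB) = (oM = gpos D mC)"
    and E: "E = D\<lparr>gund := map_option (Transposition.transpose tA tB \<circ> Transposition.transpose mA mC
                  \<circ> Transposition.transpose bB bC) \<circ> gund D \<circ> (Transposition.transpose tA tB
                  \<circ> Transposition.transpose mA mC \<circ> Transposition.transpose bB bC),
              gpos := gpos D \<circ> (Transposition.transpose tA tB \<circ> Transposition.transpose mA mC
                  \<circ> Transposition.transpose bB bC)\<rparr>"
    using mv unfolding gd_R3_def Let_def by blast
  have nz: "tA \<noteq> 0" "tB \<noteq> 0" "mA \<noteq> 0" "mC \<noteq> 0" "bB \<noteq> 0" "bC \<noteq> 0"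
    using wf_gd_und[OF wf uA] wf_gd_und[OF wf uB] wf_gd_und[OF wf uC] by auto
  have adj_plug: "gd_adj (plug W e D) o' (e u) (e v) \<longleftrightarrow> gd_adj D o' u v"
    if "u \<noteq> 0" "v \<noteq> 0" for o' u v
    using that by (simp add: gd_adj_def plug_nxt_e_eq del: plug_e)
  define \<tau> where "\<tau> = Transposition.transpose tA tB \<circ> Transposition.transpose mA mC
    \<circ> Transposition.transpose bB bC"
  define \<tau>' where "\<tau>' = Transposition.transpose (e tA) (e tB) \<circ> Transposition.transpose (e mA) (e mC)
    \<circ> Transposition.transpose (e bB) (e bC)"
  have "\<tau>' (e z) = e (\<tau> z)" for z
    by (simp add: \<tau>_def \<tau>'_def transpose_e)
  moreover have "\<tau>' x = x" if "x \<notin> range e" for x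
    using that by (simp add: \<tau>'_def transpose_not_range)
  ultimately have E': "plug W e E = (plug W e D)\<lparr>gund := map_option \<tau>' \<circ> gund (plug W e D) \<circ> \<tau>',
      gpos := gpos (plug W e D) \<circ> \<tau>'\<rparr>"
    unfolding E \<tau>_def[symmetric] by (rule plug_relabel_crossings)
  have "distinct [e tA, e tB, e mC]" using ds by simp
  moreover have "gund (plug W e D) (e tA) = Some (e mA)" "gund (plug W e D) (e tB) = Some (e bB)"
    "gund (plug W e D) (e mC) = Some (e bC)"
    using uA uB uC by simp_all
  moreover have "gd_adj (plug W e D) oT (e tA) (e tB)" "gd_adj (plug W e D) oM (e mA) (e mC)"
    "gd_adj (plug W e D) oB (e bB) (e bC)"
    using adj nz by (simp_all add: adj_plug)
  moreover have "(oM = gpos (plug W e D) (e tA)) = (oB = gpos (plug W e D) (e tB))"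
    "(oT = gpos (plug W e D) (e tB)) = (oM = gpos (plug W e D) (e mC))"
    using sg by simp_all
  ultimately show ?thesis
    unfolding gd_R3_def Let_def using E'[unfolded \<tau>'_def] by blast
qed

lemma rmove_plug:
  assumes "wf_gd D" and "rmove D E"
  shows "rmove (plug W e D) (plug W e E)"
  using assms gd_iso_plug ins_plain_plug gd_R1_plug gd_R2_plug gd_R3_plug
  unfolding rmove_def by blast

lemma gd_birth_plug:
  assumes wf: "wf_gd D" and mv: "gd_birth D E"
  shows "gd_birth (plug W e D) (plug W e E)"
proof -
  obtain p where p: "p \<notin> gpts D" and E: "E = D\<lparr>gpts := insert p (gpts D)\<rparr>"
    using mv unfolding gd_birth_def by blast
  have "p \<noteq> 0" using p wf_gd_zero[OF wf] by metis
  then have "e p \<notin> gpts (plug W e D)"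
    using p e_in_W_iff by (simp add: gpts_plug image_iff)
  moreover have "plug W e E = (plug W e D)\<lparr>gpts := insert (e p) (gpts (plug W e D))\<rparr>"
    by (rule gdiag_eq_split[where e = e]) (auto simp: E gpts_plug plug_not_range)
  ultimately show ?thesis
    unfolding gd_birth_def by blast
qed

lemma gd_saddle_plug:
  assumes mv: "gd_saddle D E"
  shows "gd_saddle (plug W e D) (plug W e E)"
proof -
  obtain x y where x: "x \<in> gpts D" and y: "y \<in> gpts D" and xy: "x \<noteq> y"
    and E: "E = D\<lparr>gnxt := (gnxt D)(x := gnxt D y, y := gnxt D x)\<rparr>"
    using mv unfolding gd_saddle_def by blast
  have "plug W e E = (plug W e D)\<lparr>gnxt := (gnxt (plug W e D))(e x := gnxt (plug W e D) (e y),
      e y := gnxt (plug W e D) (e x))\<rparr>"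
    by (rule gdiag_eq_split[where e = e]) (auto simp: E gpts_plug plug_not_range)
  then show ?thesis
    unfolding gd_saddle_def using x y xy
    by (intro exI[of _ "e x"] exI[of _ "e y"]) (simp add: gpts_plug)
qed

lemma cob_plug: "cob D E k \<Longrightarrow> cob (plug W e D) (plug W e E) k"
proof (induction rule: cob.induct)
  case (cob_refl D)
  then show ?case using wf_plug by (blast intro: cob.cob_refl)
next
  case (cob_move D E k F)
  then show ?case
    using rmove_plug wf_plug cob_wf[OF cob_move.hyps(1)] by (blast intro: cob.cob_move)
next
  case (cob_birth D E k F)
  then show ?case
    using gd_birth_plug wf_plug cob_wf[OF cob_birth.hyps(1)] by (blast intro: cob.cob_birth)
next
  case (cob_death D E k F)
  then show ?case
    using gd_birth_plug wf_plug by (blast intro: cob.cob_death)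
next
  case (cob_saddle D E k F)
  then show ?case
    using gd_saddle_plug wf_plug by (blast intro: cob.cob_saddle)
qed

lemma long_knot_plug:
  assumes lW: "long_knot W" and lD: "long_knot D"
  shows "long_knot (plug W e D)"
proof -
  let ?P = "plug W e D"
  let ?R = "orbit (gnxt ?P) 0"
  have wfD: "wf_gd D" using lD by (simp add: long_knot_def)
  have wfP: "wf_gd ?P" by (rule wf_plug[OF wfD])
  have "permutation (gnxt ?P)"
    by (rule permutes_imp_permutation[OF wf_gd_finite[OF wfP] wf_gd_permutes[OF wfP]])
  then have R_0: "0 \<in> ?R" by (rule permutation_self_in_orbit)
  have strand_D: "e ` gpts D \<subseteq> ?R \<and> gnxt W (e 0) \<in> ?R" if e0: "e 0 \<in> ?R"
  proof -
    have iter: "e ((gnxt D ^^ n) 0) \<in> ?R" for n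
    proof (induction n)
      case (Suc n)
      then show ?case
        using orbit.step[OF Suc.IH] e0 by (cases "(gnxt D ^^ Suc n) 0 = 0") simp_all
    qed (simp add: e0)
    have sub: "e ` gpts D \<subseteq> ?R" using iter lD by (auto simp: long_knot_def)
    obtain z where z: "z \<in> gpts D" "gnxt D z = 0"
      using permutes_image[OF wf_gd_permutes[OF wfD]] wf_gd_zero[OF wfD] by (metis imageE)
    then have "gnxt ?P (e z) \<in> ?R" using sub by (blast intro: orbit.step)
    then show ?thesis using sub z(2) by simp
  qed
  have W_R: "(gnxt W ^^ n) 0 \<in> ?R" for n
  proof (induction n)
    case (Suc n)
    let ?w = "(gnxt W ^^ n) 0"
    show ?case
    proof (cases "?w \<in> range e")
      case True
      then have "?w = e 0"
        using pts_range wf_gd_iter_in[OF wf_W wf_gd_zero[OF wf_W]] by blast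
      then show ?thesis using strand_D Suc.IH by simp
    next
      case False
      then show ?thesis using orbit.step[OF Suc.IH] by (simp add: plug_not_range)
    qed
  qed (simp add: R_0)
  have "gpts W \<subseteq> ?R" using W_R lW by (auto simp: long_knot_def)
  moreover have "e 0 \<in> gpts W" using e_in_W_iff by simp
  ultimately have "gpts ?P \<subseteq> ?R" using strand_D by (auto simp: gpts_plug)
  then show ?thesis using long_knot_iff_orbit[OF wfP] by simp
qed

end

lemma slot_plug:
  assumes "slot W e" and "slot W e'" and disj: "range e \<inter> range e' = {}" and wf: "wf_gd D"
  shows "slot (plug W e D) e'"
proof -
  interpret s: slot W e by fact
  interpret s': slot W e' by fact
  have e'0: "e' 0 \<notin> range e" using disj by blast
  show ?thesis
  proof
    show "wf_gd (plug W e D)" using wf by (rule s.wf_plug)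
    show "inj e'" by (rule s'.inj_e)
    show "gpts (plug W e D) \<inter> range e' = {e' 0}"
      using s'.pts_range disj by (auto simp: gpts_plug)
    show "gund (plug W e D) (e' 0) = None"
      using e'0 s'.und_slot by (simp add: s.plug_not_range)
    show "e' 0 \<notin> ran (gund (plug W e D))"
    proof
      assume "e' 0 \<in> ran (gund (plug W e D))"
      then obtain x where "gund (plug W e D) x = Some (e' 0)" by (auto simp: ran_def)
      then show False
        using s.plug_und_SomeD e'0 s'.slot_not_under by (blast intro: ranI)
    qed
  qed
qed

lemma plug_commute:
  assumes "range e \<inter> range e' = {}"
  shows "plug (plug W e D) e' L = plug (plug W e' L) e D"
proof -
  have "x \<notin> range e" if "x \<in> range e'" for x using assms that by blast
  moreover have "x \<notin> range e'" if "x \<in> range e" for x using assms that by blast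
  ultimately show ?thesis
    by (simp add: plug_def fun_eq_iff Un_ac)
qed

section \<open>Concatenation\<close>

text \<open>\<open>gd_cat\<close> is concatenation with fixed labels: the left factor lives on the even labels
  \<open>lft z\<close>, the right factor on the odd labels \<open>rgt z\<close>. Unlike in \<open>lk_concat\<close>, the labels of one
  factor do not depend on the other one, so both factors are plugged into fixed slots.\<close>

definition lft :: "nat \<Rightarrow> nat" where "lft z = 2 * z"

definition rgt :: "nat \<Rightarrow> nat" where "rgt z = 2 * z + 1"

lemma lft_eq_iff [simp]: "lft x = lft y \<longleftrightarrow> x = y"
  by (simp add: lft_def)

lemma rgt_eq_iff [simp]: "rgt x = rgt y \<longleftrightarrow> x = y"
  by (simp add: rgt_def)

lemma lft_neq_rgt [simp]: "lft x \<noteq> rgt y" "rgt y \<noteq> lft x"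
  unfolding lft_def rgt_def by presburger+

lemma lft_eq_0_iff [simp]: "lft z = 0 \<longleftrightarrow> z = 0" "0 = lft z \<longleftrightarrow> z = 0"
  by (auto simp: lft_def)

lemma rgt_neq_0 [simp]: "rgt z \<noteq> 0" "0 \<noteq> rgt z"
  by (simp_all add: rgt_def)

lemma lft_0 [simp]: "lft 0 = 0"
  by simp

lemma inj_lft: "inj lft" and inj_rgt: "inj rgt"
  by (simp_all add: inj_def)

lemma range_lft_rgt_disjoint: "range lft \<inter> range rgt = {}"
  by auto

lemma not_in_range_lft_rgt [simp]: "rgt z \<notin> range lft" "lft z \<notin> range rgt" "0 \<notin> range rgt"
  by auto

lemma the_inv_lft_rgt [simp]: "the_inv lft (lft z) = z" "the_inv rgt (rgt z) = z"
  by (simp_all add: the_inv_f_f inj_lft inj_rgt)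

lemma lft_rgt_cases: obtains z where "x = lft z" | z where "x = rgt z"
  unfolding lft_def rgt_def by (metis oddE evenE)

definition frame :: gdiag where
  "frame = \<lparr>gpts = {0, rgt 0}, gnxt = Transposition.transpose 0 (rgt 0),
     gund = Map.empty, gpos = (\<lambda>_. True)\<rparr>"

lemma wf_frame: "wf_gd frame"
  by (simp add: wf_gd_def frame_def permutes_swap_id)

lemma long_knot_frame: "long_knot frame"
  unfolding long_knot_def
proof (intro conjI ballI)
  fix x assume "x \<in> gpts frame"
  then have "x = (gnxt frame ^^ 0) 0 \<or> x = (gnxt frame ^^ 1) 0"
    by (auto simp: frame_def)
  then show "\<exists>n. (gnxt frame ^^ n) 0 = x" by blast
qed (rule wf_frame)

lemma slot_frame_lft: "slot frame lft"
proof
  show "wf_gd frame" by (rule wf_frame)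
  show "inj lft" by (rule inj_lft)
qed (auto simp: frame_def)

lemma slot_frame_rgt: "slot frame rgt"
proof
  show "wf_gd frame" by (rule wf_frame)
  show "inj rgt" by (rule inj_rgt)
qed (auto simp: frame_def)

definition gd_cat :: "gdiag \<Rightarrow> gdiag \<Rightarrow> gdiag" where
  "gd_cat D L = plug (plug frame rgt L) lft D"

lemma gd_cat_swap: "gd_cat D L = plug (plug frame lft D) rgt L"
  unfolding gd_cat_def using range_lft_rgt_disjoint by (simp add: plug_commute Int_commute)

lemma slot_gd_cat_left: "wf_gd L \<Longrightarrow> slot (plug frame rgt L) lft"
  by (intro slot_plug[OF slot_frame_rgt slot_frame_lft]) auto

lemma slot_gd_cat_right: "wf_gd D \<Longrightarrow> slot (plug frame lft D) rgt"
  by (intro slot_plug[OF slot_frame_lft slot_frame_rgt]) auto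

lemma gd_cat_lft [simp]:
  "gnxt (gd_cat D L) (lft z) = (if gnxt D z = 0 then rgt 0 else lft (gnxt D z))"
  "gund (gd_cat D L) (lft z) = map_option lft (gund D z)"
  "gpos (gd_cat D L) (lft z) = gpos D z"
  by (simp_all add: gd_cat_def plug_def frame_def)

lemma gd_cat_rgt [simp]:
  "gnxt (gd_cat D L) (rgt z) = (if gnxt L z = 0 then 0 else rgt (gnxt L z))"
  "gund (gd_cat D L) (rgt z) = map_option rgt (gund L z)"
  "gpos (gd_cat D L) (rgt z) = gpos L z"
  by (simp_all add: gd_cat_def plug_def frame_def)

lemma gpts_gd_cat:
  assumes "wf_gd D" and "wf_gd L"
  shows "gpts (gd_cat D L) = lft ` gpts D \<union> rgt ` gpts L"
  using wf_gd_zero[OF assms(1)] wf_gd_zero[OF assms(2)]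
  by (auto simp: gd_cat_def gpts_plug frame_def image_iff intro: exI[of _ 0])

lemma wf_gd_cat: "wf_gd D \<Longrightarrow> wf_gd L \<Longrightarrow> wf_gd (gd_cat D L)"
  unfolding gd_cat_def by (rule slot.wf_plug[OF slot_gd_cat_left])

lemma long_knot_gd_cat: "long_knot D \<Longrightarrow> long_knot L \<Longrightarrow> long_knot (gd_cat D L)"
  unfolding gd_cat_def
  by (rule slot.long_knot_plug[OF slot_gd_cat_left slot.long_knot_plug[OF slot_frame_rgt long_knot_frame]])
     (simp_all add: long_knot_def)

lemma cob_gd_cat_left: "cob D E k \<Longrightarrow> wf_gd L \<Longrightarrow> cob (gd_cat D L) (gd_cat E L) k"
  unfolding gd_cat_def by (rule slot.cob_plug[OF slot_gd_cat_left])

lemma cob_gd_cat_right: "cob D E k \<Longrightarrow> wf_gd L \<Longrightarrow> cob (gd_cat L D) (gd_cat L E) k"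
  unfolding gd_cat_swap by (rule slot.cob_plug[OF slot_gd_cat_right])

lemma lk_concat_left:
  assumes "x \<in> gpts D"
  shows "gnxt (lk_concat D L) x = (if gnxt D x = 0 then Suc (Max (gpts D)) else gnxt D x)"
    "gund (lk_concat D L) x = gund D x" "gpos (lk_concat D L) x = gpos D x"
  using assms by (simp_all add: lk_concat_def Let_def)

lemma lk_concat_right:
  assumes N: "N = Suc (Max (gpts D))" and fin: "finite (gpts D)" and z: "z \<in> gpts L"
  shows "gnxt (lk_concat D L) (z + N) = (if gnxt L z = 0 then 0 else gnxt L z + N)"
    "gund (lk_concat D L) (z + N) = map_option (\<lambda>y. y + N) (gund L z)"
    "gpos (lk_concat D L) (z + N) = gpos L z"
proof -
  have "z + N \<notin> gpts D"
  proof
    assume "z + N \<in> gpts D"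
    then have "z + N \<le> Max (gpts D)" using Max_ge[OF fin] by blast
    then show False using N by simp
  qed
  then show "gnxt (lk_concat D L) (z + N) = (if gnxt L z = 0 then 0 else gnxt L z + N)"
    "gund (lk_concat D L) (z + N) = map_option (\<lambda>y. y + N) (gund L z)"
    "gpos (lk_concat D L) (z + N) = gpos L z"
    using z by (simp_all add: lk_concat_def Let_def N[symmetric])
qed

lemma lk_concat_outside:
  assumes "x \<notin> gpts (lk_concat D L)"
  shows "gnxt (lk_concat D L) x = x" "gund (lk_concat D L) x = None"
proof -
  have "x \<notin> gpts D" "\<not> (Suc (Max (gpts D)) \<le> x \<and> x - Suc (Max (gpts D)) \<in> gpts L)"
    using assms by (auto simp: lk_concat_def Let_def image_iff intro: exI[of _ "x - Suc (Max (gpts D))"])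
  then show "gnxt (lk_concat D L) x = x" "gund (lk_concat D L) x = None"
    by (auto simp: lk_concat_def Let_def)
qed

lemma gd_iso_gd_cat_lk_concat:
  assumes wD: "wf_gd D" and wL: "wf_gd L"
  shows "gd_iso (gd_cat D L) (lk_concat D L)"
proof -
  define N where "N = Suc (Max (gpts D))"
  have fin: "finite (gpts D)" using wf_gd_finite[OF wD] .
  have below: "x < N" if "x \<in> gpts D" for x
    using Max_ge[OF fin that] by (simp add: N_def)
  define f where "f y = (if even y then y div 2 else y div 2 + N)" for y
  have f_lft [simp]: "f (lft x) = x" and f_rgt [simp]: "f (rgt z) = z + N" for x z
    by (simp_all add: f_def lft_def rgt_def)
  have f_und_lft: "map_option f (map_option lft u) = u" for u
    by (cases u) simp_all
  have f_und_rgt: "map_option f (map_option rgt u) = map_option (\<lambda>y. y + N) u" for u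
    by (cases u) simp_all
  have inj: "inj_on f (gpts (gd_cat D L))"
    using below by (fastforce simp: inj_on_def gpts_gd_cat[OF wD wL])
  have img: "f ` gpts (gd_cat D L) = gpts (lk_concat D L)"
    by (simp add: gpts_gd_cat[OF wD wL] image_Un image_image lk_concat_def Let_def N_def)
  have "gnxt (lk_concat D L) (f y) = f (gnxt (gd_cat D L) y)
      \<and> gund (lk_concat D L) (f y) = map_option f (gund (gd_cat D L) y)
      \<and> gpos (lk_concat D L) (f y) = gpos (gd_cat D L) y"
    if y: "y \<in> gpts (gd_cat D L)" for y
  proof -
    consider (D) x where "x \<in> gpts D" "y = lft x" | (L) z where "z \<in> gpts L" "y = rgt z"
      using y by (auto simp: gpts_gd_cat[OF wD wL])
    then show ?thesis
    proof cases
      case D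
      then show ?thesis
        using f_rgt[of 0] by (simp add: lk_concat_left f_und_lft N_def[symmetric])
    next
      case L
      then show ?thesis
        using f_lft[of 0] by (simp add: lk_concat_right[OF N_def fin] f_und_rgt)
    qed
  qed
  then show ?thesis
    using f_lft[of 0] by (intro gd_isoI[OF wf_gd_cat[OF wD wL] inj _ img]) simp_all
qed

lemma wf_lk_concat: "wf_gd D \<Longrightarrow> wf_gd L \<Longrightarrow> wf_gd (lk_concat D L)"
  by (rule wf_gd_iso[OF gd_iso_gd_cat_lk_concat wf_gd_cat]) (simp_all add: lk_concat_outside)

lemma long_knot_lk_concat: "long_knot D \<Longrightarrow> long_knot L \<Longrightarrow> long_knot (lk_concat D L)"
  by (rule long_knot_iso[OF gd_iso_gd_cat_lk_concat long_knot_gd_cat wf_lk_concat])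
     (simp_all add: long_knot_def)

lemma cob_gd_cat_lk_concat: "wf_gd D \<Longrightarrow> wf_gd L \<Longrightarrow> cob (gd_cat D L) (lk_concat D L) 0"
  by (intro cob_rmoveI wf_gd_cat wf_lk_concat) (simp_all add: rmove_def gd_iso_gd_cat_lk_concat)

lemma concordant_via_gd_cat:
  assumes "long_knot A" "long_knot B" "long_knot C" "long_knot D"
    and "cob (gd_cat A B) (gd_cat C D) 0"
  shows "concordant (lk_concat A B) (lk_concat C D)"
proof -
  have "cob (lk_concat A B) (gd_cat A B) 0" "cob (gd_cat C D) (lk_concat C D) 0"
    using assms(1-4) by (auto simp: long_knot_def intro: cob_sym cob_gd_cat_lk_concat)
  then have "cob (lk_concat A B) (lk_concat C D) 0"
    using cob_trans[OF cob_trans[OF _ assms(5)]] by fastforce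
  then show ?thesis
    using assms(1-4) by (simp add: concordant_def long_knot_lk_concat)
qed

lemma concordant_lk_concat:
  assumes "concordant K1 K2" and "concordant L1 L2"
  shows "concordant (lk_concat K1 L1) (lk_concat K2 L2)"
proof -
  have lk: "long_knot K1" "long_knot K2" "long_knot L1" "long_knot L2"
    and "cob K1 K2 0" "cob L1 L2 0"
    using assms by (auto simp: concordant_def)
  then have "cob (gd_cat K1 L1) (gd_cat K2 L1) 0" "cob (gd_cat K2 L1) (gd_cat K2 L2) 0"
    by (auto simp: long_knot_def intro: cob_gd_cat_left cob_gd_cat_right)
  then show ?thesis
    using concordant_via_gd_cat[OF lk(1,3,2,4)] cob_trans by fastforce
qed

lemma gd_cat_zero: "gnxt (gd_cat D L) 0 = (if gnxt D 0 = 0 then rgt 0 else lft (gnxt D 0))"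
  "gund (gd_cat D L) 0 = map_option lft (gund D 0)"
  using gd_cat_lft[of D L 0] by simp_all

lemma cob_gd_cat_triv_long:
  assumes wA: "wf_gd A"
  shows "cob (gd_cat triv_long A) A 0"
proof -
  let ?G = "gd_cat triv_long A"
  let ?D0 = "?G\<lparr>gpts := gpts ?G - {rgt 0}, gnxt := (gnxt ?G)(0 := gnxt ?G (rgt 0), rgt 0 := rgt 0)\<rparr>"
  have wG: "wf_gd ?G" using wf_gd_cat[OF wf_triv_long wA] .
  have pts: "gpts ?G = insert 0 (rgt ` gpts A)"
    by (simp add: gpts_gd_cat[OF wf_triv_long wA]) (simp add: triv_long_def)
  have und_A0: "gund A 0 = None" using wf_gd_und_out[OF wA] by simp
  have not_under: "rgt 0 \<notin> ran (gund ?G)"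
  proof
    assume "rgt 0 \<in> ran (gund ?G)"
    then obtain y where y: "gund ?G y = Some (rgt 0)" by (auto simp: ran_def)
    show False
    proof (cases y rule: lft_rgt_cases)
      case (1 z) then show ?thesis using y by (simp add: triv_long_def)
    next
      case (2 z) then show ?thesis using y wf_gd_und[OF wA, of z 0] by auto
    qed
  qed
  have c1: "cob ?G ?D0 0"
    by (rule cob_remove_plain_point[OF wG])
       (simp_all add: gd_cat_zero pts wf_gd_zero[OF wA] und_A0 not_under, simp add: triv_long_def)
  define f where "f z = (if z = 0 then 0 else rgt z)" for z
  have "gd_iso A ?D0"
  proof (rule gd_isoI[OF wA])
    show "inj_on f (gpts A)" by (auto simp: f_def inj_on_def)
    show "f 0 = 0" by (simp add: f_def)
    show "f ` gpts A = gpts ?D0"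
      using wf_gd_zero[OF wA] by (auto simp: f_def pts image_iff)
  next
    fix z assume z: "z \<in> gpts A"
    have und_f: "map_option f (gund A z) = map_option rgt (gund A z)"
      using wf_gd_und[OF wA] by (cases "gund A z") (auto simp: f_def)
    show "gnxt ?D0 (f z) = f (gnxt A z)"
      by (cases "z = 0") (simp_all add: f_def triv_long_def)
    show "gund ?D0 (f z) = map_option f (gund A z)"
      by (cases "z = 0") (simp_all add: f_def und_f und_A0 gd_cat_zero triv_long_def)
    show "gpos ?D0 (f z) = gpos A z" if "gund A z \<noteq> None"
      using that und_A0 by (cases "z = 0") (simp_all add: f_def)
  qed
  then have "cob ?D0 A 0"
    using wA cob_wf[OF c1] by (intro cob_rmoveI) (simp_all add: rmove_def)
  then show ?thesis using cob_trans[OF c1] by fastforce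
qed

lemma gd_iso_gd_cat_assoc:
  assumes wA: "wf_gd A" and wB: "wf_gd B" and wC: "wf_gd C"
  shows "gd_iso (gd_cat (gd_cat A B) C) (gd_cat A (gd_cat B C))"
proof -
  let ?L = "gd_cat (gd_cat A B) C" and ?R = "gd_cat A (gd_cat B C)"
  define f where "f y = (if y mod 4 = 0 then y div 2 else if y mod 4 = 2 then y - 1 else 2 * y + 1)"
    for y :: nat
  have f_ll [simp]: "f (lft (lft z)) = lft z"
    and f_lr [simp]: "f (lft (rgt z)) = rgt (lft z)"
    and f_r [simp]: "f (rgt z) = rgt (rgt z)" for z
    by (simp_all add: f_def lft_def rgt_def) presburger+
  have f0: "f 0 = 0"
    using f_ll[of 0] by simp
  have pts_L: "gpts ?L = lft ` lft ` gpts A \<union> lft ` rgt ` gpts B \<union> rgt ` gpts C"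
    using wA wB wC by (simp add: gpts_gd_cat wf_gd_cat image_Un)
  have pts_R: "gpts ?R = lft ` gpts A \<union> rgt ` lft ` gpts B \<union> rgt ` rgt ` gpts C"
    using wA wB wC by (simp add: gpts_gd_cat wf_gd_cat image_Un Un_assoc)
  have pt: "gnxt ?R (f y) = f (gnxt ?L y) \<and> gund ?R (f y) = map_option f (gund ?L y)
      \<and> gpos ?R (f y) = gpos ?L y" if y: "y \<in> gpts ?L" for y
  proof -
    consider (A) z where "y = lft (lft z)" | (B) z where "y = lft (rgt z)" | (C) z where "y = rgt z"
      using y by (auto simp: pts_L)
    then show ?thesis
    proof cases
      case A then show ?thesis by (cases "gund A z") simp_all
    next
      case B then show ?thesis by (cases "gund B z") simp_all
    next
      case C then show ?thesis using f0 by (cases "gund C z") simp_all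
    qed
  qed
  have inj: "inj_on f (gpts ?L)"
    by (auto simp: inj_on_def pts_L)
  have img: "f ` gpts ?L = gpts ?R"
    by (simp add: pts_L pts_R image_Un image_image)
  show ?thesis
    by (rule gd_isoI[OF wf_gd_cat[OF wf_gd_cat[OF wA wB] wC] inj f0 img]) (simp_all add: pt)
qed

section \<open>Inverses\<close>

text \<open>The reflection of a diagram in a vertical line: the strand is traversed backwards, the
  over/under information is kept, and every crossing changes its sign.\<close>

definition lk_reflect :: "gdiag \<Rightarrow> gdiag" where
  "lk_reflect K = \<lparr>gpts = gpts K, gnxt = inv_into UNIV (gnxt K), gund = gund K,
     gpos = (\<lambda>x. \<not> gpos K x)\<rparr>"

lemma lk_reflect_simps [simp]:
  "gpts (lk_reflect K) = gpts K" "gnxt (lk_reflect K) = inv_into UNIV (gnxt K)"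
  "gund (lk_reflect K) = gund K" "gpos (lk_reflect K) = (\<lambda>x. \<not> gpos K x)"
  by (simp_all add: lk_reflect_def)

lemma wf_lk_reflect: "wf_gd K \<Longrightarrow> wf_gd (lk_reflect K)"
  using permutes_inv[OF wf_gd_permutes] by (simp add: wf_gd_def)

lemma long_knot_lk_reflect:
  assumes "long_knot K"
  shows "long_knot (lk_reflect K)"
proof -
  have wf: "wf_gd K" using assms by (simp add: long_knot_def)
  have "permutation (gnxt K)"
    by (rule permutes_imp_permutation[OF wf_gd_finite[OF wf] wf_gd_permutes[OF wf]])
  then show ?thesis
    using assms wf_lk_reflect[OF wf]
    by (simp add: long_knot_iff_orbit wf orbit_inv_eq)
qed

text \<open>\<open>zip_swap K S\<close> is the product of the disjoint transpositions of \<open>lft (gnxt K b)\<close> and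
  \<open>rgt b\<close>, \<open>b \<in> S\<close>. In \<open>gd_cat (lk_reflect K) K\<close>, composing the successor map with one of them
  is the saddle between the arc from \<open>lft (gnxt K b)\<close> to \<open>lft b\<close> of the reflected copy and the
  antiparallel arc from \<open>rgt b\<close> to \<open>rgt (gnxt K b)\<close> of \<open>K\<close>. After all of them, \<open>lft z\<close> and
  \<open>rgt z\<close> form a circle for each \<open>z \<noteq> 0\<close>, so the two copies of a crossing form a bigon (all
  removed in \<open>unlinked\<close>), and then the circles die one by one (\<open>pruned\<close>).\<close>

definition zip_swap :: "gdiag \<Rightarrow> nat set \<Rightarrow> nat \<Rightarrow> nat" where
  "zip_swap K S v =
    (if v \<in> lft ` gnxt K ` S then rgt (inv_into UNIV (gnxt K) (the_inv lft v))
     else if v \<in> rgt ` S then lft (gnxt K (the_inv rgt v)) else v)"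

definition zipped :: "gdiag \<Rightarrow> nat set \<Rightarrow> gdiag" where
  "zipped K S = (gd_cat (lk_reflect K) K)\<lparr>gnxt := gnxt (gd_cat (lk_reflect K) K) \<circ> zip_swap K S\<rparr>"

definition unlinked :: "gdiag \<Rightarrow> nat set \<Rightarrow> gdiag" where
  "unlinked K U = (zipped K (gpts K))\<lparr>gund := (\<lambda>v. if v \<in> lft ` U \<union> rgt ` U then None
     else gund (zipped K (gpts K)) v)\<rparr>"

definition pruned :: "gdiag \<Rightarrow> nat set \<Rightarrow> gdiag" where
  "pruned K V = (unlinked K (dom (gund K)))\<lparr>
     gpts := gpts (unlinked K (dom (gund K))) - lft ` V - rgt ` V,
     gnxt := (\<lambda>v. if v \<in> lft ` V \<union> rgt ` V then v else gnxt (unlinked K (dom (gund K))) v)\<rparr>"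

context
  fixes K :: gdiag
  assumes wf: "wf_gd K"
begin

lemma inv_gnxt_gnxt [simp]: "inv_into UNIV (gnxt K) (gnxt K b) = b"
  using permutes_inverses(2)[OF wf_gd_permutes[OF wf]] .

lemma gnxt_inv_gnxt [simp]: "gnxt K (inv_into UNIV (gnxt K) b) = b"
  using permutes_inverses(1)[OF wf_gd_permutes[OF wf]] .

lemma gnxt_eq_iff [simp]: "gnxt K a = gnxt K b \<longleftrightarrow> a = b"
  using wf_gd_nxt_inj[OF wf] by blast

lemma zip_swap_lft: "b \<in> S \<Longrightarrow> zip_swap K S (lft (gnxt K b)) = rgt b"
  by (simp add: zip_swap_def)

lemma zip_swap_rgt: "b \<in> S \<Longrightarrow> zip_swap K S (rgt b) = lft (gnxt K b)"
  by (auto simp: zip_swap_def)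

lemma zip_swap_insert:
  assumes "b \<notin> S"
  shows "zip_swap K (insert b S)
    = zip_swap K S \<circ> Transposition.transpose (lft (gnxt K b)) (rgt b)"
proof
  fix v
  consider "v = lft (gnxt K b)" | "v = rgt b" | "v \<noteq> lft (gnxt K b)" "v \<noteq> rgt b" by blast
  then show "zip_swap K (insert b S) v = (zip_swap K S \<circ> Transposition.transpose (lft (gnxt K b)) (rgt b)) v"
    by cases (use assms in \<open>auto simp: zip_swap_def image_iff\<close>)
qed

lemma gpts_gd_cat_reflect: "gpts (gd_cat (lk_reflect K) K) = lft ` gpts K \<union> rgt ` gpts K"
  by (simp add: gpts_gd_cat wf_lk_reflect wf)

lemma cob_zipped:
  assumes "finite S" and "S \<subseteq> gpts K"
  shows "cob (gd_cat (lk_reflect K) K) (zipped K S) (- int (card S))"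
  using assms
proof (induction S rule: finite_induct)
  case empty
  have "zip_swap K {} = id" by (simp add: zip_swap_def fun_eq_iff)
  then show ?case
    using wf_gd_cat[OF wf_lk_reflect[OF wf] wf] by (simp add: zipped_def cob_refl)
next
  case (insert b S)
  have IH: "cob (gd_cat (lk_reflect K) K) (zipped K S) (- int (card S))"
    using insert by simp
  have b: "b \<in> gpts K" "gnxt K b \<in> gpts K" using insert(4) wf_gd_nxt_in[OF wf] by auto
  have "cob (zipped K S) ((zipped K S)\<lparr>gnxt := gnxt (zipped K S)
      \<circ> Transposition.transpose (lft (gnxt K b)) (rgt b)\<rparr>) (-1)"
    using cob_wf[OF IH] b by (intro cob_saddle_transpose) (simp_all add: zipped_def gpts_gd_cat_reflect)
  then have "cob (zipped K S) (zipped K (insert b S)) (-1)"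
    using insert(2) by (simp add: zipped_def zip_swap_insert comp_assoc)
  then show ?case
    using cob_trans[OF IH] insert(1,2) by fastforce
qed

lemma zipped_all_nxt:
  assumes z: "z \<in> gpts K"
  shows "gnxt (zipped K (gpts K)) (lft z) = (if z = 0 then 0 else rgt z)"
    and "gnxt (zipped K (gpts K)) (rgt z) = (if z = 0 then rgt 0 else lft z)"
proof -
  have "inv_into UNIV (gnxt K) z \<in> gpts K"
    using permutes_in_image[OF permutes_inv[OF wf_gd_permutes[OF wf]]] z by simp
  then have "zip_swap K (gpts K) (lft z) = rgt (inv_into UNIV (gnxt K) z)"
    using zip_swap_lft[of "inv_into UNIV (gnxt K) z" "gpts K"] by simp
  then show "gnxt (zipped K (gpts K)) (lft z) = (if z = 0 then 0 else rgt z)"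
    by (simp add: zipped_def)
  show "gnxt (zipped K (gpts K)) (rgt z) = (if z = 0 then rgt 0 else lft z)"
    using z by (simp add: zipped_def zip_swap_rgt gpts_gd_cat_reflect)
qed

lemma cob_zipped_all: "cob (gd_cat (lk_reflect K) K) (zipped K (gpts K)) (- int (card (gpts K)))"
  using wf_gd_finite[OF wf] by (rule cob_zipped) simp

lemma wf_unlinked: "wf_gd (unlinked K U)"
  unfolding unlinked_def
  by (rule wf_gd_restrict_und) (use cob_wf[OF cob_zipped_all] in auto)

lemma gd_R2_unlinked:
  assumes c: "c \<in> dom (gund K)" and cU: "c \<notin> U"
  shows "gd_R2 (unlinked K U) (unlinked K (insert c U))"
proof -
  obtain d where d: "gund K c = Some d" using c by auto
  have cd: "c \<in> gpts K" "c \<noteq> 0" "d \<in> gpts K" "d \<noteq> 0" using wf_gd_und[OF wf d] by auto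
  have nxt: "gnxt (unlinked K U) (lft z) = rgt z" if "z \<in> gpts K" "z \<noteq> 0" for z
    using that by (simp add: unlinked_def zipped_all_nxt)
  have und: "gund (unlinked K U) (lft c) = Some (lft d)" "gund (unlinked K U) (rgt c) = Some (rgt d)"
    using cU d by (auto simp: unlinked_def zipped_def)
  have pos: "gpos (unlinked K U) (lft c) \<noteq> gpos (unlinked K U) (rgt c)"
    by (simp add: unlinked_def zipped_def)
  have "unlinked K (insert c U)
      = (unlinked K U)\<lparr>gund := (gund (unlinked K U))(lft c := None, rgt c := None)\<rparr>"
    by (simp add: unlinked_def fun_eq_iff)
  then show ?thesis
    unfolding gd_R2_def using und nxt[OF cd(1,2)] nxt[OF cd(3,4)] pos by blast
qed

lemma cob_unlinked:
  assumes "finite U" and "U \<subseteq> dom (gund K)"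
  shows "cob (zipped K (gpts K)) (unlinked K U) 0"
  using assms
proof (induction U rule: finite_induct)
  case empty
  have "unlinked K {} = zipped K (gpts K)" by (simp add: unlinked_def)
  then show ?case using cob_wf[OF cob_zipped_all] by (simp add: cob_refl)
next
  case (insert c U)
  then have "cob (unlinked K U) (unlinked K (insert c U)) 0"
    using gd_R2_unlinked wf_unlinked by (intro cob_rmoveI) (simp_all add: rmove_def)
  then show ?case using insert cob_trans by fastforce
qed

lemma unlinked_all_und: "gund (unlinked K (dom (gund K))) v = None"
proof (cases v rule: lft_rgt_cases)
  case (1 z) then show ?thesis by (cases "gund K z") (auto simp: unlinked_def zipped_def)
next
  case (2 z) then show ?thesis by (cases "gund K z") (auto simp: unlinked_def zipped_def)
qed

lemma pruned_nxt:
  assumes "z \<in> gpts K" "z \<noteq> 0" "z \<notin> V"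
  shows "gnxt (pruned K V) (lft z) = rgt z" "gnxt (pruned K V) (rgt z) = lft z"
  using assms by (auto simp: pruned_def unlinked_def zipped_all_nxt)

lemma cob_pruned_step:
  assumes z: "z \<in> gpts K" "z \<noteq> 0" "z \<notin> V" and wfP: "wf_gd (pruned K V)"
  shows "cob (pruned K V) (pruned K (insert z V)) 1"
proof -
  let ?P = "pruned K V"
  let ?Y = "?P\<lparr>gpts := gpts ?P - {rgt z}, gnxt := (gnxt ?P)(lft z := gnxt ?P (rgt z), rgt z := rgt z)\<rparr>"
  have pts: "gpts ?P = lft ` gpts K \<union> rgt ` gpts K - lft ` V - rgt ` V"
    by (simp add: pruned_def unlinked_def zipped_def gpts_gd_cat_reflect)
  have und: "gund ?P v = None" for v
    using unlinked_all_und by (simp add: pruned_def)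
  then have nran: "p \<notin> ran (gund ?P)" for p
    by (simp add: ran_def)
  have c1: "cob ?P ?Y 0"
    by (rule cob_remove_plain_point[OF wfP pruned_nxt(1)[OF z] _ _ _ und nran]) (use z in \<open>auto simp: pts\<close>)
  have c2: "cob ?Y (?Y\<lparr>gpts := gpts ?Y - {lft z}\<rparr>) 1"
    by (rule cob_remove_trivial_circle[OF conjunct2[OF cob_wf[OF c1]]])
       (use z in \<open>auto simp: pts und nran pruned_nxt\<close>)
  have "?Y\<lparr>gpts := gpts ?Y - {lft z}\<rparr> = pruned K (insert z V)"
  proof (rule gdiag.equality)
    show "gnxt (?Y\<lparr>gpts := gpts ?Y - {lft z}\<rparr>) = gnxt (pruned K (insert z V))"
    proof
      fix v
      show "gnxt (?Y\<lparr>gpts := gpts ?Y - {lft z}\<rparr>) v = gnxt (pruned K (insert z V)) v"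
        using pruned_nxt(2)[OF z] by (cases "v = lft z \<or> v = rgt z") (auto simp: pruned_def)
    qed
  qed (auto simp: pruned_def)
  then show ?thesis using cob_trans[OF c1 c2] by simp
qed

lemma cob_pruned:
  assumes "finite V" and "V \<subseteq> gpts K - {0}"
  shows "cob (unlinked K (dom (gund K))) (pruned K V) (int (card V))"
  using assms
proof (induction V rule: finite_induct)
  case empty
  have "pruned K {} = unlinked K (dom (gund K))" by (simp add: pruned_def)
  then show ?case using wf_unlinked by (simp add: cob_refl)
next
  case (insert z V)
  then have IH: "cob (unlinked K (dom (gund K))) (pruned K V) (int (card V))" by simp
  have "cob (pruned K V) (pruned K (insert z V)) 1"
    using insert cob_wf[OF IH] by (intro cob_pruned_step) auto
  then show ?case using cob_trans[OF IH] insert(1,2) by (simp add: add.commute)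
qed

lemma cob_pruned_triv_long: "cob (pruned K (gpts K - {0})) triv_long 1"
proof -
  let ?P = "pruned K (gpts K - {0})"
  have wfP: "wf_gd ?P"
    using cob_wf[OF cob_pruned] wf_gd_finite[OF wf] by blast
  have pts: "gpts ?P = {0, rgt 0}"
    using wf_gd_zero[OF wf]
    by (auto simp: pruned_def unlinked_def zipped_def gpts_gd_cat_reflect image_iff)
  have nxt: "gnxt ?P 0 = 0" "gnxt ?P (rgt 0) = rgt 0"
    using zipped_all_nxt[OF wf_gd_zero[OF wf]]
    by (auto simp: pruned_def unlinked_def image_iff)
  have und: "gund ?P v = None" for v
    using unlinked_all_und by (simp add: pruned_def)
  then have nran: "p \<notin> ran (gund ?P)" for p
    by (simp add: ran_def)
  have c: "cob ?P (?P\<lparr>gpts := gpts ?P - {rgt 0}\<rparr>) 1"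
    by (rule cob_remove_trivial_circle[OF wfP]) (simp_all add: pts nxt und nran)
  have "gd_iso (?P\<lparr>gpts := gpts ?P - {rgt 0}\<rparr>) triv_long"
    by (rule gd_iso_on_pts) (auto simp: pts nxt und triv_long_def)
  then have "cob (?P\<lparr>gpts := gpts ?P - {rgt 0}\<rparr>) triv_long 0"
    using cob_wf[OF c] wf_triv_long by (intro cob_rmoveI) (simp_all add: rmove_def)
  then show ?thesis using cob_trans[OF c] by fastforce
qed

lemma cob_gd_cat_reflect_triv_long: "cob (gd_cat (lk_reflect K) K) triv_long 0"
proof -
  have fin: "finite (gpts K)" and zero: "0 \<in> gpts K"
    using wf_gd_finite[OF wf] wf_gd_zero[OF wf] .
  have "finite (dom (gund K))"
    using wf fin by (auto simp: wf_gd_def intro: finite_subset)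
  then have "cob (zipped K (gpts K)) (unlinked K (dom (gund K))) 0"
    by (rule cob_unlinked) simp
  moreover have "cob (unlinked K (dom (gund K))) (pruned K (gpts K - {0}))
      (int (card (gpts K - {0})))"
    using fin by (intro cob_pruned) simp_all
  ultimately have "cob (gd_cat (lk_reflect K) K) triv_long
      (- int (card (gpts K)) + 0 + int (card (gpts K - {0})) + 1)"
    using cob_trans[OF cob_trans[OF cob_trans[OF cob_zipped_all]] cob_pruned_triv_long] by blast
  moreover have "card (gpts K) > 0"
    using fin zero card_gt_0_iff by blast
  ultimately show ?thesis
    using fin zero by (simp add: of_nat_diff)
qed

end

section \<open>The concordance group\<close>

lemma concordant_lk_concat_triv_long:
  assumes "long_knot A"
  shows "concordant (lk_concat triv_long A) A"
proof -
  have wA: "wf_gd A" using assms by (simp add: long_knot_def)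
  have "cob (lk_concat triv_long A) (gd_cat triv_long A) 0"
    by (rule cob_sym[OF cob_gd_cat_lk_concat[OF wf_triv_long wA]])
  then have "cob (lk_concat triv_long A) A 0"
    using cob_trans[OF _ cob_gd_cat_triv_long[OF wA]] by fastforce
  then show ?thesis
    using assms by (simp add: concordant_def long_knot_lk_concat long_knot_triv_long)
qed

lemma concordant_lk_concat_assoc:
  assumes "long_knot A" "long_knot B" "long_knot C"
  shows "concordant (lk_concat (lk_concat A B) C) (lk_concat A (lk_concat B C))"
proof -
  have wA: "wf_gd A" and wB: "wf_gd B" and wC: "wf_gd C"
    using assms by (simp_all add: long_knot_def)
  have c1: "cob (gd_cat (lk_concat A B) C) (gd_cat (gd_cat A B) C) 0"
    by (rule cob_gd_cat_left[OF cob_sym[OF cob_gd_cat_lk_concat[OF wA wB]] wC])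
  have c2: "cob (gd_cat (gd_cat A B) C) (gd_cat A (gd_cat B C)) 0"
    using gd_iso_gd_cat_assoc[OF wA wB wC] wA wB wC
    by (intro cob_rmoveI wf_gd_cat) (simp_all add: rmove_def)
  have c3: "cob (gd_cat A (gd_cat B C)) (gd_cat A (lk_concat B C)) 0"
    by (rule cob_gd_cat_right[OF cob_gd_cat_lk_concat[OF wB wC] wA])
  from cob_trans[OF cob_trans[OF c1 c2] c3]
  have "cob (gd_cat (lk_concat A B) C) (gd_cat A (lk_concat B C)) 0" by simp
  then show ?thesis
    using assms by (intro concordant_via_gd_cat long_knot_lk_concat)
qed

lemma concordant_lk_concat_reflect:
  assumes "long_knot K"
  shows "concordant (lk_concat (lk_reflect K) K) triv_long"
proof -
  have wK: "wf_gd K" using assms by (simp add: long_knot_def)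
  have "cob (lk_concat (lk_reflect K) K) (gd_cat (lk_reflect K) K) 0"
    by (rule cob_sym[OF cob_gd_cat_lk_concat[OF wf_lk_reflect[OF wK] wK]])
  then have "cob (lk_concat (lk_reflect K) K) triv_long 0"
    using cob_trans[OF _ cob_gd_cat_reflect_triv_long[OF wK]] by fastforce
  then show ?thesis
    using assms by (simp add: concordant_def long_knot_lk_concat long_knot_lk_reflect
        long_knot_triv_long)
qed

lemma conc_class_eq_iff:
  "long_knot a \<Longrightarrow> long_knot b \<Longrightarrow> conc_rel `` {a} = conc_rel `` {b} \<longleftrightarrow> concordant a b"
  using eq_equiv_class_iff[OF equiv_conc_rel] by (simp add: conc_rel_def)

lemma conc_class_in_VC: "long_knot a \<Longrightarrow> conc_rel `` {a} \<in> VC"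
  unfolding VC_def by (rule quotientI) simp

lemma VC_cases:
  assumes "X \<in> VC"
  obtains a where "long_knot a" and "X = conc_rel `` {a}"
  using assms unfolding VC_def by (auto elim: quotientE)

lemma vc_mult_classes:
  assumes a: "long_knot a" and b: "long_knot b"
  shows "vc_mult (conc_rel `` {a}) (conc_rel `` {b}) = conc_rel `` {lk_concat a b}"
proof -
  have "conc_rel `` {lk_concat a' b'} = conc_rel `` {lk_concat a b}"
    if "a' \<in> conc_rel `` {a}" "b' \<in> conc_rel `` {b}" for a' b'
  proof -
    have "concordant a' a" "concordant b' b"
      using that equiv_conc_rel by (auto simp: conc_rel_def concordant_def intro: cob_sym)
    then have "concordant (lk_concat a' b') (lk_concat a b)"
      by (rule concordant_lk_concat)
    then show ?thesis
      using conc_class_eq_iff by (auto simp: concordant_def)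
  qed
  moreover have "a \<in> conc_rel `` {a}" "b \<in> conc_rel `` {b}"
    using a b equiv_class_self[OF equiv_conc_rel] by simp_all
  ultimately show ?thesis
    unfolding vc_mult_def by blast
qed

lemma vc_mult_closed: "X \<in> VC \<Longrightarrow> Y \<in> VC \<Longrightarrow> vc_mult X Y \<in> VC"
  by (elim VC_cases) (simp add: vc_mult_classes long_knot_lk_concat conc_class_in_VC)

lemma vc_mult_assoc:
  "X \<in> VC \<Longrightarrow> Y \<in> VC \<Longrightarrow> Z \<in> VC \<Longrightarrow> vc_mult (vc_mult X Y) Z = vc_mult X (vc_mult Y Z)"
  by (elim VC_cases)
     (simp add: vc_mult_classes long_knot_lk_concat conc_class_eq_iff concordant_lk_concat_assoc)

lemma vc_mult_triv_long: "X \<in> VC \<Longrightarrow> vc_mult (conc_rel `` {triv_long}) X = X"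
  by (elim VC_cases)
     (simp add: vc_mult_classes long_knot_lk_concat long_knot_triv_long conc_class_eq_iff
       concordant_lk_concat_triv_long)

lemma vc_mult_reflect:
  "long_knot K \<Longrightarrow> vc_mult (conc_rel `` {lk_reflect K}) (conc_rel `` {K}) = conc_rel `` {triv_long}"
  by (simp add: vc_mult_classes long_knot_lk_reflect long_knot_lk_concat long_knot_triv_long
      conc_class_eq_iff concordant_lk_concat_reflect)

theorem theorem1:
  shows "equiv {K. long_knot K} conc_rel \<and> group VC_group"
proof
  show "equiv {K. long_knot K} conc_rel" by (rule equiv_conc_rel)
  show "group VC_group"
  proof (rule groupI)
    fix X assume "X \<in> carrier VC_group"
    then obtain K where K: "long_knot K" "X = conc_rel `` {K}"
      by (auto simp: VC_group_def elim: VC_cases)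
    then show "\<exists>Y\<in>carrier VC_group. Y \<otimes>\<^bsub>VC_group\<^esub> X = \<one>\<^bsub>VC_group\<^esub>"
      using vc_mult_reflect long_knot_lk_reflect conc_class_in_VC
      by (auto simp: VC_group_def intro!: bexI[of _ "conc_rel `` {lk_reflect K}"])
  qed (simp_all add: VC_group_def vc_mult_closed vc_mult_assoc vc_mult_triv_long conc_class_in_VC
      long_knot_triv_long)
qed

end
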